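(* Let $L=(a_1,\dots,a_N)$ be as in the context, with associated $\psi$, $\mathcal H_s$, $\mathrm{LB}_s$, $\widetilde{\mathbf b}$ and $\widehat H$. Let $K$ be a sequence of positive integers with $K_n=ab^n(1+o(1))$, where $a,b$ are positive reals with $\log_\psi b$ irrational. Then for every $s\in\mathbb{N}$ and $\mathbf b\in\mathcal H_s$, $$\lim_{n\to\infty}\frac{\#\{k\le n:\mathrm{LB}_s(K_k)=\mathbf b\}}{n}=\log_\psi\frac{\widetilde{\mathbf b}\cdot\widehat H}{\mathbf b\cdot\widehat H}.$$
   Context: Fix $N\ge2$ and $L=(a_1,\dots,a_N)\in\mathbb{N}_0^N$ with $a_1>0$. Let $\Theta=(a_1,\dots,a_N,a_1,\dots,a_N,\dots)$ (periodic), $\Theta|s=(\Theta(1),\dots,\Theta(s))$. Let $\mathcal H^\circ$ be the set of finite tuples of nonnegative integers defined recursively: $\epsilon$ of length $n$ (the empty tuple included) lies in $\mathcal H^\circ$ iff either $\epsilon=\Theta|n$, or there is $0\le s<n$ with $(\epsilon(1),\dots,\epsilon(s))=\Theta|s$, $\epsilon(s+1)<\Theta(s+1)$ and $(\epsilon(s+2),\dots,\epsilon(n))\in\mathcal H^\circ$. Let $\mathcal H=\{\epsilon\in\mathcal H^\circ:\epsilon(1)>0\}$. Let $H$ be given by $H_n=1+\sum_{k=1}^{n-1}a_kH_{n-k}$ ($1\le n\le N+1$) and $H_{n+N}=a_1H_{n+N-1}+\dots+a_{N-1}H_{n+1}+(1+a_N)H_n$; every $m\in\mathbb{N}$ has a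 unique expansion $m=\epsilon*H:=\sum_{k=1}^{M}\epsilon(k)H_{M-k+1}$ with $\epsilon\in\mathcal H$, $M=\mathrm{len}(\epsilon)$. $\mathrm{LB}_s(m)$: if $N\le s\le M$ it is $(\epsilon(1),\dots,\epsilon(s))$; if $s<N$ and $s\le M$ it is $(\epsilon(1),\dots,\epsilon(s),0,\dots,0)$ of length $N$; undefined if $s>M$. $\mathcal H_s$ is the finite set of values of $\mathrm{LB}_s$, listed $\mathbf b_1,\dots,\mathbf b_\ell$ in lexicographic order (equivalently, consecutive blocks satisfy $1+\mathbf b_k|s*H=\mathbf b_{k+1}|s*H$, where $|s$ truncates to length $s$). Exclusive block: if $s\ge N$, $s\equiv p\pmod N$, $0\le p<N$, then $\mathbf b_{\ell+1}$ has length $s$, its first $s-p$ entries are $\Theta|(s-p)$ except that the last of these (equal to $a_N$) is replaced by $1+a_N$, and its last $p$ entries are $0$; if $s<N$, $\mathbf b_{\ell+1}=(a_1,\dots,a_{N-1},1+a_N)$. For $\mathbf b=\mathbf b_k$ set $\widetilde{\mathbf b}=\mathbf b_{k+1}$. $\psi$ is the unique positive real zero of $x^N-\sum_{k=1}^{N-1}a_kx^{N-k}-(1+a_N)$, $\theta=\psi^{-1}$, and $\mathbf b\cdot\widehat H=\sum_k\mathbf b(k)\theta^{k-1}$. *)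

theory Defs
  imports Complex_Main
begin

text \<open>The parameter list L = (a_1,...,a_N) is a list of naturals; a_k = L ! (k-1).
  Tuples are lists, epsilon(k) = eps ! (k-1).\<close>


definition aco :: "nat list \<Rightarrow> nat \<Rightarrow> nat" where
  "aco L k = L ! (k - 1)"

definition theta_seq :: "nat list \<Rightarrow> nat \<Rightarrow> nat" where
  "theta_seq L k = L ! ((k - 1) mod length L)"

definition theta_pre :: "nat list \<Rightarrow> nat \<Rightarrow> nat list" where
  "theta_pre L s = map (theta_seq L) [1..<Suc s]"

inductive_set Hcirc :: "nat list \<Rightarrow> nat list set" for L where
  full: "theta_pre L n \<in> Hcirc L"
| step: "c < theta_seq L (Suc s) \<Longrightarrow> r \<in> Hcirc L \<Longrightarrow> theta_pre L s @ [c] @ r \<in> Hcirc L"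

definition Hadm :: "nat list \<Rightarrow> nat list set" where
  "Hadm L = {e \<in> Hcirc L. e \<noteq> [] \<and> hd e > 0}"

text \<open>Given xs = [H_1,...,H_m], compute H_(m+1).\<close>
definition Hnext :: "nat list \<Rightarrow> nat list \<Rightarrow> nat" where
  "Hnext L xs = (let N = length L; n = Suc (length xs) in
     if n \<le> N + 1 then 1 + (\<Sum>k=1..<n. aco L k * xs ! (n - k - 1))
     else (\<Sum>k=1..<N. aco L k * xs ! (n - k - 1)) + (1 + aco L N) * xs ! (n - N - 1))"

primrec Hlist :: "nat list \<Rightarrow> nat \<Rightarrow> nat list" where
  "Hlist L 0 = []"
| "Hlist L (Suc m) = Hlist L m @ [Hnext L (Hlist L m)]"

text \<open>H_n for n >= 1.\<close>
definition Hs :: "nat list \<Rightarrow> nat \<Rightarrow> nat" where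
  "Hs L n = Hlist L n ! (n - 1)"

definition evalH :: "nat list \<Rightarrow> nat list \<Rightarrow> nat" where
  "evalH L e = (\<Sum>k=1..length e. e ! (k - 1) * Hs L (length e - k + 1))"

definition expansion :: "nat list \<Rightarrow> nat \<Rightarrow> nat list" where
  "expansion L m = (THE e. e \<in> Hadm L \<and> evalH L e = m)"

text \<open>LB_s(m); None means undefined.\<close>
definition LB :: "nat list \<Rightarrow> nat \<Rightarrow> nat \<Rightarrow> nat list option" where
  "LB L s m = (let e = expansion L m; M = length e in
     if s > M then None
     else if length L \<le> s then Some (take s e)
     else Some (take s e @ replicate (length L - s) 0))"

definition Hblocks :: "nat list \<Rightarrow> nat \<Rightarrow> nat list set" where
  "Hblocks L s = {b. \<exists>m::nat. m \<ge> 1 \<and> LB L s m = Some b}"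

definition lexless :: "nat list \<Rightarrow> nat list \<Rightarrow> bool" where
  "lexless xs ys \<longleftrightarrow> (xs, ys) \<in> lexord {(x, y). x < y}"

definition exclusive_block :: "nat list \<Rightarrow> nat \<Rightarrow> nat list" where
  "exclusive_block L s = (let N = length L; p = s mod N in
     if N \<le> s then take (s - p - 1) (theta_pre L (s - p)) @ [1 + aco L N] @ replicate p 0
     else butlast L @ [1 + last L])"

definition succ_block :: "nat list \<Rightarrow> nat \<Rightarrow> nat list \<Rightarrow> nat list" where
  "succ_block L s b = (if \<exists>c \<in> Hblocks L s. lexless b c
     then (THE c. c \<in> Hblocks L s \<and> lexless b c \<and>
                  (\<forall>d \<in> Hblocks L s. lexless b d \<longrightarrow> \<not> lexless d c))
     else exclusive_block L s)"

definition psi :: "nat list \<Rightarrow> real" where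
  "psi L = (THE x. x > 0 \<and> x ^ length L - (\<Sum>k=1..<length L. real (aco L k) * x ^ (length L - k))
             - (1 + real (aco L (length L))) = 0)"

definition thetaR :: "nat list \<Rightarrow> real" where
  "thetaR L = inverse (psi L)"

definition dotH :: "nat list \<Rightarrow> nat list \<Rightarrow> real" where
  "dotH L b = (\<Sum>k=1..length b. real (b ! (k - 1)) * thetaR L ^ (k - 1))"

end

theory Submission
  imports Defs "HOL-Analysis.Kronecker_Approximation_Theorem"
begin

(* The sequence H n / psi ^ n converges to a constant H_const > 0, by an averaging argument for
   the renewal-type recurrence of H.  The numbers whose expansion has length M and leading block p
   form an interval [val p (M - s), upper_end s p M), and after division by H_const * psi ^ M its
   end points tend to dotH L p and dotH L (succ_block L s (pad s p)).  Taking logarithms to base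
   psi, LB_s(K k) = pad s p thus holds, up to an error vanishing as k grows, exactly when the
   fractional part of log_psi (K k / H_const) = k * log_psi beta + const + o(1) lies in an
   interval of length log_psi (dotH L (succ_block ...) / dotH L p).  As log_psi beta is
   irrational, k * log_psi beta is equidistributed modulo 1; this is proved by tiling [0,1) with
   rotations of a short interval [0, frac (q * log_psi beta)) obtained from Kronecker's theorem. *)

section \<open>Equidistribution of an irrational rotation\<close>

definition frac_count :: "real \<Rightarrow> real \<Rightarrow> real \<Rightarrow> nat \<Rightarrow> nat" where
  "frac_count \<gamma> \<delta> c n = card {k \<in> {1..n}. frac (real k * \<gamma> + \<delta>) < c}"

lemma card_filter_int_shift:
  "card {k \<in> {1..n::nat}. Q (int k + t)} = card {i \<in> {1+t..int n + t}. Q i}"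
proof -
  have "{i \<in> {1+t..int n + t}. Q i} = (\<lambda>k. int k + t) ` {k \<in> {1..n::nat}. Q (int k + t)}"
  proof (rule set_eqI, rule iffI)
    fix i assume "i \<in> {i \<in> {1+t..int n + t}. Q i}"
    then show "i \<in> (\<lambda>k. int k + t) ` {k \<in> {1..n::nat}. Q (int k + t)}"
      by (intro image_eqI[of _ _ "nat (i - t)"]) auto
  qed auto
  moreover have "inj_on (\<lambda>k. int k + t) {k \<in> {1..n::nat}. Q (int k + t)}"
    by (auto simp: inj_on_def)
  ultimately show ?thesis by (simp add: card_image)
qed

lemma card_filter_int_interval_le:
  fixes a b a' b' :: int
  shows "card {i \<in> {a..b}. Q i} \<le> card {i \<in> {a'..b'}. Q i} + nat (a' - a) + nat (b - b')"
proof -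
  have "{i \<in> {a..b}. Q i} \<subseteq> {a..a'-1} \<union> {i \<in> {a'..b'}. Q i} \<union> {b'+1..b}" by auto
  then have "card {i \<in> {a..b}. Q i} \<le> card ({a..a'-1} \<union> {i \<in> {a'..b'}. Q i} \<union> {b'+1..b})"
    by (intro card_mono) (auto intro: finite_subset[of _ "{a'..b'}"])
  also have "\<dots> \<le> card {a..a'-1} + card {i \<in> {a'..b'}. Q i} + card {b'+1..b}"
    by (meson add_le_mono card_Un_le le_refl order_trans)
  finally show ?thesis by simp
qed

lemma frac_count_shift:
  fixes t :: int
  shows "\<bar>int (frac_count \<gamma> (\<delta> + of_int t * \<gamma>) c n) - int (frac_count \<gamma> \<delta> c n)\<bar> \<le> \<bar>t\<bar>"
proof -
  define Q where "Q i \<longleftrightarrow> frac (of_int i * \<gamma> + \<delta>) < c" for i :: int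
  have shifted: "frac_count \<gamma> (\<delta> + of_int t * \<gamma>) c n = card {i \<in> {1+t..int n + t}. Q i}"
    using card_filter_int_shift[of n Q t]
    unfolding frac_count_def Q_def by (simp add: algebra_simps)
  have unshifted: "frac_count \<gamma> \<delta> c n = card {i \<in> {1..int n}. Q i}"
    using card_filter_int_shift[of n Q 0] unfolding frac_count_def Q_def by simp
  have "card {i \<in> {1+t..int n + t}. Q i} \<le> card {i \<in> {1..int n}. Q i} + nat (- t) + nat t"
    using card_filter_int_interval_le[of "1+t" "int n + t" Q 1 "int n"] by simp
  moreover have "card {i \<in> {1..int n}. Q i} \<le> card {i \<in> {1+t..int n + t}. Q i} + nat t + nat (- t)"
    using card_filter_int_interval_le[of 1 "int n" Q "1+t" "int n + t"] by simp
  ultimately show ?thesis unfolding shifted unshifted by linarith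
qed

lemma frac_count_le: "frac_count \<gamma> \<delta> c n \<le> n"
  unfolding frac_count_def by (rule order_trans[OF card_mono[of "{1..n}"]]) auto

lemma frac_count_one: "frac_count \<gamma> \<delta> 1 n = n"
proof -
  have "{k \<in> {1..n}. frac (real k * \<gamma> + \<delta>) < 1} = {1..n}" by (auto simp: frac_lt_1)
  then show ?thesis unfolding frac_count_def by simp
qed

lemma exists_small_frac_mult:
  assumes "\<gamma> \<notin> \<rat>" "0 < e"
  obtains q :: nat where "0 < frac (real q * \<gamma>)" "frac (real q * \<gamma>) < e"
proof -
  have "0 \<le> min e 1 / 2" "min e 1 / 2 \<le> 1" "0 < min e 1 / 2" using assms(2) by auto
  then obtain q :: nat where "\<bar>frac (real q * \<gamma>) - min e 1 / 2\<bar> < min e 1 / 2"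
    using Kronecker_approx_1_explicit[OF assms(1)] by metis
  then have "0 < frac (real q * \<gamma>)" "frac (real q * \<gamma>) < min e 1"
    unfolding abs_less_iff by linarith+
  then show thesis
    using that[of q] by simp
qed

(* As q * gamma = eta modulo 1, rotating delta by j * eta amounts to shifting the index k by j * q. *)
lemma frac_count_rotate:
  assumes "\<eta> = frac (real q * \<gamma>)" "j \<le> J"
  shows "\<bar>real (frac_count \<gamma> (\<delta> - real j * \<eta>) c n) - real (frac_count \<gamma> \<delta> c n)\<bar>
           \<le> real J * real q"
proof -
  have "frac (x + (\<delta> - real j * \<eta>)) = frac (x + (\<delta> + of_int (- int (j * q)) * \<gamma>))" for x
  proof -
    have "x + (\<delta> - real j * \<eta>) = x + (\<delta> + of_int (- int (j * q)) * \<gamma>) + of_int (int j * \<lfloor>real q * \<gamma>\<rfloor>)"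
      unfolding assms(1) frac_def by (simp add: algebra_simps)
    then show ?thesis by (simp only: frac_add_of_int_right)
  qed
  then have "frac_count \<gamma> (\<delta> - real j * \<eta>) c n = frac_count \<gamma> (\<delta> + of_int (- int (j * q)) * \<gamma>) c n"
    unfolding frac_count_def by simp
  then have "\<bar>int (frac_count \<gamma> (\<delta> - real j * \<eta>) c n) - int (frac_count \<gamma> \<delta> c n)\<bar> \<le> int (j * q)"
    using frac_count_shift[of \<gamma> \<delta> "- int (j * q)" c n] by simp
  then have "real_of_int \<bar>int (frac_count \<gamma> (\<delta> - real j * \<eta>) c n) - int (frac_count \<gamma> \<delta> c n)\<bar>
      \<le> real_of_int (int (j * q))"
    by (simp only: of_int_le_iff)
  moreover have "real j * real q \<le> real J * real q" using assms(2) by (simp add: mult_right_mono)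
  ultimately show ?thesis by simp
qed

lemma frac_diff_eq: "0 \<le> x \<Longrightarrow> x \<le> frac y \<Longrightarrow> frac (y - x) = frac y - x"
  by (subst frac_unique_iff) (use frac_lt_1[of y] in \<open>auto simp: frac_def\<close>)

lemma frac_add_eq: "0 \<le> x \<Longrightarrow> frac z + x < 1 \<Longrightarrow> frac (z + x) = frac z + x"
  by (subst frac_unique_iff) (auto simp: frac_def)

lemma frac_in_tile:
  assumes "0 \<le> \<eta>" "frac (y - real j * \<eta>) < \<eta>" "(real j + 1) * \<eta> \<le> 1"
  shows "real j * \<eta> \<le> frac y" "frac y < (real j + 1) * \<eta>"
proof -
  have "frac (y - real j * \<eta> + real j * \<eta>) = frac (y - real j * \<eta>) + real j * \<eta>"
    using assms by (intro frac_add_eq) (simp_all add: algebra_simps)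
  then show "real j * \<eta> \<le> frac y" "frac y < (real j + 1) * \<eta>"
    using assms(2) by (simp_all add: algebra_simps frac_ge_0)
qed

lemma frac_count_le_tiles:
  assumes \<eta>: "0 < \<eta>" "\<eta> = frac (real q * \<gamma>)" and "0 \<le> c"
  defines "J \<equiv> nat \<lceil>c / \<eta>\<rceil>"
  shows "real (frac_count \<gamma> \<delta> c n) \<le> real J * (real (frac_count \<gamma> \<delta> \<eta> n) + real J * real q)"
proof -
  define S where "S j = {k \<in> {1..n}. frac (real k * \<gamma> + (\<delta> - real j * \<eta>)) < \<eta>}" for j :: nat
  have "{k \<in> {1..n}. frac (real k * \<gamma> + \<delta>) < c} \<subseteq> (\<Union>j<J. S j)"
  proof
    fix k assume k: "k \<in> {k \<in> {1..n}. frac (real k * \<gamma> + \<delta>) < c}"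
    define y where "y = real k * \<gamma> + \<delta>"
    define j where "j = nat \<lfloor>frac y / \<eta>\<rfloor>"
    have "real j \<le> frac y / \<eta>" "frac y / \<eta> < real j + 1"
      unfolding j_def using \<eta>(1) by simp_all
    then have j: "real j * \<eta> \<le> frac y" "frac y < (real j + 1) * \<eta>"
      using \<eta>(1) by (simp_all add: field_simps)
    have "frac y / \<eta> < c / \<eta>" using k \<eta>(1) unfolding y_def by (simp add: divide_strict_right_mono)
    then have "j < J" unfolding J_def using \<open>real j \<le> frac y / \<eta>\<close> by linarith
    moreover have "frac (y - real j * \<eta>) < \<eta>"
      using frac_diff_eq[of "real j * \<eta>" y] j \<eta>(1) by (simp add: algebra_simps)
    ultimately show "k \<in> (\<Union>j<J. S j)" using k unfolding S_def y_def by (auto simp: algebra_simps)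
  qed
  then have "frac_count \<gamma> \<delta> c n \<le> card (\<Union>j<J. S j)"
    unfolding frac_count_def by (rule card_mono[rotated]) (auto simp: S_def)
  also have "\<dots> \<le> (\<Sum>j<J. card (S j))" by (rule card_UN_le) simp
  also have "\<dots> = (\<Sum>j<J. frac_count \<gamma> (\<delta> - real j * \<eta>) \<eta> n)" unfolding S_def frac_count_def ..
  finally have "real (frac_count \<gamma> \<delta> c n) \<le> (\<Sum>j<J. real (frac_count \<gamma> (\<delta> - real j * \<eta>) \<eta> n))"
    unfolding of_nat_sum[symmetric] of_nat_le_iff .
  also have "\<dots> \<le> (\<Sum>j<J. real (frac_count \<gamma> \<delta> \<eta> n) + real J * real q)"
  proof (rule sum_mono)
    fix j assume "j \<in> {..<J}"
    then show "real (frac_count \<gamma> (\<delta> - real j * \<eta>) \<eta> n) \<le> real (frac_count \<gamma> \<delta> \<eta> n) + real J * real q"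
      using frac_count_rotate[OF \<eta>(2), of j J \<delta> \<eta> n] by (simp add: abs_le_iff)
  qed
  finally show ?thesis by simp
qed

lemma frac_count_ge_tiles:
  assumes \<eta>: "0 < \<eta>" "\<eta> = frac (real q * \<gamma>)" and "c \<le> 1"
  defines "J \<equiv> nat \<lfloor>c / \<eta>\<rfloor>"
  shows "real J * (real (frac_count \<gamma> \<delta> \<eta> n) - real J * real q) \<le> real (frac_count \<gamma> \<delta> c n)"
proof -
  define S where "S j = {k \<in> {1..n}. frac (real k * \<gamma> + (\<delta> - real j * \<eta>)) < \<eta>}" for j :: nat
  have top: "(real j + 1) * \<eta> \<le> c" if "j < J" for j
  proof -
    have "real j + 1 \<le> c / \<eta>" using that unfolding J_def by linarith
    then show ?thesis using \<eta>(1) by (simp add: field_simps)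
  qed
  have tile: "real j * \<eta> \<le> frac (real k * \<gamma> + \<delta>) \<and> frac (real k * \<gamma> + \<delta>) < (real j + 1) * \<eta>"
    if "k \<in> S j" "j < J" for j k
    using frac_in_tile[of \<eta> "real k * \<gamma> + \<delta>" j] that top[OF that(2)] \<eta>(1) \<open>c \<le> 1\<close>
    unfolding S_def by (simp add: algebra_simps)
  have disjoint: "S i \<inter> S j = {}" if "i < J" "j < J" "i \<noteq> j" for i j
  proof (rule ccontr)
    assume "S i \<inter> S j \<noteq> {}"
    then obtain k where "k \<in> S i" "k \<in> S j" by blast
    from tile[OF this(1) that(1)] tile[OF this(2) that(2)]
    have "real i * \<eta> < (real j + 1) * \<eta>" "real j * \<eta> < (real i + 1) * \<eta>" by auto
    then show False using \<eta>(1) that(3) by (simp add: mult_less_cancel_right)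
  qed
  have "(\<Sum>j<J. frac_count \<gamma> (\<delta> - real j * \<eta>) \<eta> n) = (\<Sum>j<J. card (S j))"
    unfolding S_def frac_count_def ..
  also have "\<dots> = card (\<Union>j<J. S j)"
    by (rule card_UN_disjoint[symmetric]) (use disjoint in \<open>auto simp: S_def[abs_def]\<close>)
  also have "\<dots> \<le> frac_count \<gamma> \<delta> c n"
  proof -
    have "(\<Union>j<J. S j) \<subseteq> {k \<in> {1..n}. frac (real k * \<gamma> + \<delta>) < c}"
      using tile top by (force simp: S_def)
    then show ?thesis unfolding frac_count_def by (intro card_mono) auto
  qed
  finally have "(\<Sum>j<J. real (frac_count \<gamma> (\<delta> - real j * \<eta>) \<eta> n)) \<le> real (frac_count \<gamma> \<delta> c n)"
    unfolding of_nat_sum[symmetric] of_nat_le_iff .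
  moreover have "(\<Sum>j<J. real (frac_count \<gamma> \<delta> \<eta> n) - real J * real q)
      \<le> (\<Sum>j<J. real (frac_count \<gamma> (\<delta> - real j * \<eta>) \<eta> n))"
  proof (rule sum_mono)
    fix j assume "j \<in> {..<J}"
    then show "real (frac_count \<gamma> \<delta> \<eta> n) - real J * real q \<le> real (frac_count \<gamma> (\<delta> - real j * \<eta>) \<eta> n)"
      using frac_count_rotate[OF \<eta>(2), of j J \<delta> \<eta> n] by (simp add: abs_le_iff)
  qed
  ultimately show ?thesis by simp
qed

lemma frac_count_ratio_ge:
  assumes \<eta>: "0 < \<eta>" "\<eta> = frac (real q * \<gamma>)" and "c \<le> 1" and "0 < n"
  defines "J \<equiv> nat \<lfloor>c / \<eta>\<rfloor>" and "T \<equiv> nat \<lceil>1 / \<eta>\<rceil>"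
  shows "real J / real T - real J * (real T + real J) * real q / real n
           \<le> real (frac_count \<gamma> \<delta> c n) / real n"
proof -
  have T: "0 < real T" unfolding T_def using \<eta>(1) by simp
  have "real n \<le> real T * (real (frac_count \<gamma> \<delta> \<eta> n) + real T * real q)"
    using frac_count_le_tiles[OF \<eta>, of 1 \<delta> n] unfolding T_def by (simp add: frac_count_one)
  then have "real n / real T - real T * real q \<le> real (frac_count \<gamma> \<delta> \<eta> n)"
    using T by (simp add: field_simps)
  then have "real J * (real n / real T - real T * real q - real J * real q)
      \<le> real J * (real (frac_count \<gamma> \<delta> \<eta> n) - real J * real q)"
    by (intro mult_left_mono) auto
  also have "\<dots> \<le> real (frac_count \<gamma> \<delta> c n)"
    using frac_count_ge_tiles[OF \<eta> \<open>c \<le> 1\<close>] unfolding J_def .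
  finally have "real J * (real n / real T - real T * real q - real J * real q) / real n
      \<le> real (frac_count \<gamma> \<delta> c n) / real n"
    by (simp add: divide_right_mono)
  moreover have "real J * (real n / real T - real T * real q - real J * real q) / real n
      = real J / real T - real J * (real T + real J) * real q / real n"
    using T \<open>0 < n\<close> by (simp add: field_simps)
  ultimately show ?thesis by simp
qed

lemma frac_count_ratio_le:
  assumes \<eta>: "0 < \<eta>" "\<eta> = frac (real q * \<gamma>)" and "0 \<le> c" and "0 < n"
  defines "J \<equiv> nat \<lceil>c / \<eta>\<rceil>" and "T \<equiv> nat \<lfloor>1 / \<eta>\<rfloor>"
  shows "real (frac_count \<gamma> \<delta> c n) / real n
           \<le> real J / real T + real J * (real T + real J) * real q / real n"
proof -
  have "\<eta> < 1" using \<eta>(2) frac_lt_1 by simp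
  then have T: "0 < real T" unfolding T_def using \<eta>(1) by simp
  have "real T * (real (frac_count \<gamma> \<delta> \<eta> n) - real T * real q) \<le> real n"
    using frac_count_ge_tiles[OF \<eta>, of 1 \<delta> n] unfolding T_def by (simp add: frac_count_one)
  then have "real (frac_count \<gamma> \<delta> \<eta> n) \<le> real n / real T + real T * real q"
    using T by (simp add: field_simps)
  then have "real J * (real (frac_count \<gamma> \<delta> \<eta> n) + real J * real q)
      \<le> real J * (real n / real T + real T * real q + real J * real q)"
    by (intro mult_left_mono) auto
  moreover have "real (frac_count \<gamma> \<delta> c n) \<le> real J * (real (frac_count \<gamma> \<delta> \<eta> n) + real J * real q)"
    using frac_count_le_tiles[OF \<eta> \<open>0 \<le> c\<close>] unfolding J_def .
  ultimately have "real (frac_count \<gamma> \<delta> c n) / real n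
      \<le> real J * (real n / real T + real T * real q + real J * real q) / real n"
    by (simp add: divide_right_mono)
  moreover have "real J * (real n / real T + real T * real q + real J * real q) / real n
      = real J / real T + real J * (real T + real J) * real q / real n"
    using T \<open>0 < n\<close> by (simp add: field_simps)
  ultimately show ?thesis by simp
qed

lemma frac_count_eventually_gt:
  assumes "\<gamma> \<notin> \<rat>" "c \<le> 1" "a < c"
  shows "\<forall>\<^sub>F n in sequentially. a < real (frac_count \<gamma> \<delta> c n) / real n"
proof (cases "a < 0")
  case True
  then show ?thesis by (intro always_eventually allI) (simp add: less_le_trans[OF True])
next
  case False
  obtain q where q: "0 < frac (real q * \<gamma>)" "frac (real q * \<gamma>) < (c - a) / 2"
    using exists_small_frac_mult[OF assms(1), of "(c - a) / 2"] assms(3) by auto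
  define \<eta> where "\<eta> = frac (real q * \<gamma>)"
  define J where "J = nat \<lfloor>c / \<eta>\<rfloor>"
  define T where "T = nat \<lceil>1 / \<eta>\<rceil>"
  have \<eta>: "0 < \<eta>" "2 * \<eta> < c - a" using q unfolding \<eta>_def by auto
  have "c / \<eta> - 1 < real J" unfolding J_def by linarith
  then have J: "c - \<eta> < real J * \<eta>" using \<eta>(1) by (simp add: field_simps)
  have "0 < 1 / \<eta>" using \<eta>(1) by simp
  then have "real T < 1 / \<eta> + 1" unfolding T_def by linarith
  then have "real T * \<eta> < 1 + \<eta>" using \<eta>(1) by (simp add: field_simps)
  then have "a * real T * \<eta> \<le> a * (1 + \<eta>)"
    using False mult_left_mono[of "real T * \<eta>" "1 + \<eta>" a] by (simp add: mult.assoc)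
  also have "\<dots> \<le> a + \<eta>" using \<eta>(1) assms(2,3) mult_right_mono[of a 1 \<eta>] by (simp add: algebra_simps)
  finally have "a * real T * \<eta> < real J * \<eta>" using J \<eta>(2) by linarith
  then have "a * real T < real J" using \<eta>(1) by simp
  moreover have T: "0 < real T" unfolding T_def using \<eta>(1) by simp
  ultimately have "a < real J / real T - 0" by (simp add: field_simps)
  moreover have "(\<lambda>n. real J / real T - real J * (real T + real J) * real q / real n)
      \<longlonglongrightarrow> real J / real T - 0"
    by (intro tendsto_intros lim_const_over_n)
  ultimately have "\<forall>\<^sub>F n in sequentially. a < real J / real T - real J * (real T + real J) * real q / real n"
    by (simp add: order_tendstoD(1))
  moreover have "\<forall>\<^sub>F n in sequentially. 0 < n" by (rule eventually_gt_at_top)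
  ultimately show ?thesis
  proof eventually_elim
    case (elim n)
    then show ?case
      using frac_count_ratio_ge[OF \<eta>(1) \<eta>_def assms(2) elim(2), of \<delta>, folded J_def T_def] by linarith
  qed
qed

lemma frac_count_eventually_lt:
  assumes "\<gamma> \<notin> \<rat>" "0 \<le> c" "c < a"
  shows "\<forall>\<^sub>F n in sequentially. real (frac_count \<gamma> \<delta> c n) / real n < a"
proof (cases "1 < a")
  case True
  have "real (frac_count \<gamma> \<delta> c n) / real n \<le> 1" for n
    using frac_count_le[of \<gamma> \<delta> c n] by (cases "n = 0") (simp_all add: divide_le_eq_1)
  then show ?thesis
    using True by (intro always_eventually allI) (meson le_less_trans)
next
  case False
  obtain q where q: "0 < frac (real q * \<gamma>)" "frac (real q * \<gamma>) < (a - c) / 2"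
    using exists_small_frac_mult[OF assms(1), of "(a - c) / 2"] assms(3) by auto
  define \<eta> where "\<eta> = frac (real q * \<gamma>)"
  define J where "J = nat \<lceil>c / \<eta>\<rceil>"
  define T where "T = nat \<lfloor>1 / \<eta>\<rfloor>"
  have \<eta>: "0 < \<eta>" "2 * \<eta> < a - c" "\<eta> < 1" using q frac_lt_1 unfolding \<eta>_def by auto
  have "0 \<le> c / \<eta>" using assms(2) \<eta>(1) by simp
  then have "real J < c / \<eta> + 1" unfolding J_def by linarith
  then have J: "real J * \<eta> < c + \<eta>" using \<eta>(1) by (simp add: field_simps)
  have "1 / \<eta> - 1 < real T" unfolding T_def by linarith
  then have "1 - \<eta> < real T * \<eta>" using \<eta>(1) by (simp add: field_simps)
  then have "a * (1 - \<eta>) \<le> a * real T * \<eta>"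
    using assms mult_left_mono[of "1 - \<eta>" "real T * \<eta>" a] by (simp add: mult.assoc)
  moreover have "a - \<eta> \<le> a * (1 - \<eta>)" using \<eta>(1) False mult_right_mono[of a 1 \<eta>] by (simp add: algebra_simps)
  ultimately have "real J * \<eta> < a * real T * \<eta>" using J \<eta>(2) by linarith
  then have "real J < a * real T" using \<eta>(1) by simp
  moreover have T: "0 < real T" unfolding T_def using \<eta>(1,3) by simp
  ultimately have "real J / real T + 0 < a" by (simp add: field_simps)
  moreover have "(\<lambda>n. real J / real T + real J * (real T + real J) * real q / real n)
      \<longlonglongrightarrow> real J / real T + 0"
    by (intro tendsto_intros lim_const_over_n)
  ultimately have "\<forall>\<^sub>F n in sequentially. real J / real T + real J * (real T + real J) * real q / real n < a"
    by (simp add: order_tendstoD(2))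
  moreover have "\<forall>\<^sub>F n in sequentially. 0 < n" by (rule eventually_gt_at_top)
  ultimately show ?thesis
  proof eventually_elim
    case (elim n)
    then show ?case
      using frac_count_ratio_le[OF \<eta>(1) \<eta>_def assms(2) elim(2), of \<delta>, folded J_def T_def] by linarith
  qed
qed

theorem frac_count_equidistributed:
  assumes "\<gamma> \<notin> \<rat>" "0 \<le> c" "c \<le> 1"
  shows "(\<lambda>n. real (frac_count \<gamma> \<delta> c n) / real n) \<longlonglongrightarrow> c"
proof (rule order_tendstoI)
  show "\<forall>\<^sub>F n in sequentially. a < real (frac_count \<gamma> \<delta> c n) / real n" if "a < c" for a
    using frac_count_eventually_gt[OF assms(1,3) that] .
  show "\<forall>\<^sub>F n in sequentially. real (frac_count \<gamma> \<delta> c n) / real n < a" if "c < a" for a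
    using frac_count_eventually_lt[OF assms(1,2) that] .
qed

lemma card_filter_le_add:
  assumes "\<And>k. k0 \<le> k \<Longrightarrow> P k \<Longrightarrow> Q k"
  shows "card {k \<in> {1..n::nat}. P k} \<le> card {k \<in> {1..n}. Q k} + k0"
proof -
  have "{k \<in> {1..n}. P k} \<subseteq> {k \<in> {1..n}. Q k} \<union> {..<k0}" using assms by force
  then have "card {k \<in> {1..n}. P k} \<le> card ({k \<in> {1..n}. Q k} \<union> {..<k0})" by (intro card_mono) auto
  also have "\<dots> \<le> card {k \<in> {1..n}. Q k} + card {..<k0}" by (rule card_Un_le)
  finally show ?thesis by simp
qed

lemma density_eventually_gt_by_frac_window:
  fixes P :: "nat \<Rightarrow> bool"
  assumes "g \<notin> \<rat>" "d \<le> 1" "a < d"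
    and inner: "\<And>\<epsilon>. 0 < \<epsilon> \<Longrightarrow> \<exists>\<delta>. \<forall>\<^sub>F k in sequentially. frac (real k * g + \<delta>) < d - \<epsilon> \<longrightarrow> P k"
  shows "\<forall>\<^sub>F n in sequentially. a < real (card {k \<in> {1..n}. P k}) / real n"
proof (cases "a < 0")
  case True
  then show ?thesis by (intro always_eventually allI) (simp add: less_le_trans[OF True])
next
  case False
  define c where "c = (a + d) / 2"
  obtain \<delta> where "\<forall>\<^sub>F k in sequentially. frac (real k * g + \<delta>) < c \<longrightarrow> P k"
    using inner[of "(d - a) / 2"] \<open>a < d\<close> unfolding c_def by (auto simp: field_simps)
  then obtain k0 where k0: "\<And>k. k0 \<le> k \<Longrightarrow> frac (real k * g + \<delta>) < c \<Longrightarrow> P k"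
    unfolding eventually_sequentially by blast
  have "(\<lambda>n. real (frac_count g \<delta> c n) / real n - real k0 / real n) \<longlonglongrightarrow> c - 0"
    using assms False unfolding c_def
    by (intro tendsto_diff frac_count_equidistributed lim_const_over_n) auto
  then have "\<forall>\<^sub>F n in sequentially. a < real (frac_count g \<delta> c n) / real n - real k0 / real n"
    by (rule order_tendstoD(1)) (use \<open>a < d\<close> in \<open>simp add: c_def\<close>)
  then show ?thesis
  proof eventually_elim
    case (elim n)
    have "frac_count g \<delta> c n \<le> card {k \<in> {1..n}. P k} + k0"
      unfolding frac_count_def by (rule card_filter_le_add) (use k0 in auto)
    then have "real (frac_count g \<delta> c n) / real n - real k0 / real n \<le> real (card {k \<in> {1..n}. P k}) / real n"
      by (simp add: diff_divide_distrib[symmetric] divide_right_mono)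
    then show ?case using elim by linarith
  qed
qed

lemma density_eventually_lt_by_frac_window:
  fixes P :: "nat \<Rightarrow> bool"
  assumes "g \<notin> \<rat>" "0 \<le> d" "d < a"
    and outer: "\<And>\<epsilon>. 0 < \<epsilon> \<Longrightarrow> d + \<epsilon> \<le> 1 \<Longrightarrow>
      \<exists>\<delta>. \<forall>\<^sub>F k in sequentially. P k \<longrightarrow> frac (real k * g + \<delta>) < d + \<epsilon>"
  shows "\<forall>\<^sub>F n in sequentially. real (card {k \<in> {1..n}. P k}) / real n < a"
proof (cases "1 < a")
  case True
  have "real (card {k \<in> {1..n}. P k}) / real n \<le> 1" for n
  proof -
    have "card {k \<in> {1..n}. P k} \<le> n" by (rule order_trans[OF card_mono[of "{1..n}"]]) auto
    then show ?thesis by (cases "n = 0") (simp_all add: divide_le_eq_1)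
  qed
  then show ?thesis
    using True by (intro always_eventually allI) (meson le_less_trans)
next
  case False
  define c where "c = (a + d) / 2"
  obtain \<delta> where "\<forall>\<^sub>F k in sequentially. P k \<longrightarrow> frac (real k * g + \<delta>) < c"
    using outer[of "(a - d) / 2"] \<open>d < a\<close> False unfolding c_def by (auto simp: field_simps)
  then obtain k0 where k0: "\<And>k. k0 \<le> k \<Longrightarrow> P k \<Longrightarrow> frac (real k * g + \<delta>) < c"
    unfolding eventually_sequentially by blast
  have "(\<lambda>n. real (frac_count g \<delta> c n) / real n + real k0 / real n) \<longlonglongrightarrow> c + 0"
    using assms False unfolding c_def
    by (intro tendsto_add frac_count_equidistributed lim_const_over_n) auto
  then have "\<forall>\<^sub>F n in sequentially. real (frac_count g \<delta> c n) / real n + real k0 / real n < a"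
    by (rule order_tendstoD(2)) (use \<open>d < a\<close> in \<open>simp add: c_def\<close>)
  then show ?thesis
  proof eventually_elim
    case (elim n)
    have "card {k \<in> {1..n}. P k} \<le> frac_count g \<delta> c n + k0"
      unfolding frac_count_def by (rule card_filter_le_add) (use k0 in auto)
    then have "real (card {k \<in> {1..n}. P k}) / real n \<le> real (frac_count g \<delta> c n) / real n + real k0 / real n"
      by (simp add: add_divide_distrib[symmetric] divide_right_mono)
    then show ?case using elim by linarith
  qed
qed

theorem density_by_frac_window:
  fixes P :: "nat \<Rightarrow> bool"
  assumes "g \<notin> \<rat>" "0 \<le> d" "d \<le> 1"
    and "\<And>\<epsilon>. 0 < \<epsilon> \<Longrightarrow> \<exists>\<delta>. \<forall>\<^sub>F k in sequentially. frac (real k * g + \<delta>) < d - \<epsilon> \<longrightarrow> P k"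
    and "\<And>\<epsilon>. 0 < \<epsilon> \<Longrightarrow> d + \<epsilon> \<le> 1 \<Longrightarrow>
      \<exists>\<delta>. \<forall>\<^sub>F k in sequentially. P k \<longrightarrow> frac (real k * g + \<delta>) < d + \<epsilon>"
  shows "(\<lambda>n. real (card {k \<in> {1..n}. P k}) / real n) \<longlonglongrightarrow> d"
proof (rule order_tendstoI)
  show "\<forall>\<^sub>F n in sequentially. a < real (card {k \<in> {1..n}. P k}) / real n" if "a < d" for a
    using density_eventually_gt_by_frac_window[OF assms(1,3) that assms(4)] by blast
  show "\<forall>\<^sub>F n in sequentially. real (card {k \<in> {1..n}. P k}) / real n < a" if "d < a" for a
    using density_eventually_lt_by_frac_window[OF assms(1,2) that assms(5)] by blast
qed

section \<open>Greedy expansions\<close>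

lemma length_Hlist [simp]: "length (Hlist L m) = m"
  by (induction m) auto

lemma Hs_Suc: "Hs L (Suc n) = Hnext L (Hlist L n)"
  unfolding Hs_def by (simp add: nth_append)

lemma Hlist_nth: "i < m \<Longrightarrow> Hlist L m ! i = Hs L (Suc i)"
proof (induction m)
  case (Suc m)
  then show ?case
    by (cases "i < m") (auto simp: nth_append less_Suc_eq Hs_Suc)
qed simp

lemma Hlist_nth_diff: "1 \<le> k \<Longrightarrow> k \<le> n \<Longrightarrow> Hlist L n ! (n - k) = Hs L (Suc n - k)"
  by (simp add: Hlist_nth Suc_diff_le)

lemma Hs_initial:
  assumes "n \<le> length L"
  shows "Hs L (Suc n) = 1 + (\<Sum>k=1..n. aco L k * Hs L (Suc n - k))"
proof -
  have "(\<Sum>k=1..<Suc n. aco L k * Hlist L n ! (Suc n - k - 1)) = (\<Sum>k=1..n. aco L k * Hs L (Suc n - k))"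
    by (intro sum.cong) (auto simp: Hlist_nth_diff atLeastLessThanSuc_atLeastAtMost)
  then show ?thesis
    using assms unfolding Hs_Suc Hnext_def Let_def by simp
qed

lemma Hs_recurrence:
  assumes "1 \<le> length L" "length L < n"
  shows "Hs L (Suc n) = (\<Sum>k=1..<length L. aco L k * Hs L (Suc n - k))
                        + (1 + aco L (length L)) * Hs L (Suc n - length L)"
proof -
  have "(\<Sum>k=1..<length L. aco L k * Hlist L n ! (Suc n - k - 1))
      = (\<Sum>k=1..<length L. aco L k * Hs L (Suc n - k))"
    using assms by (intro sum.cong) (auto simp: Hlist_nth_diff)
  moreover have "Hlist L n ! (Suc n - length L - 1) = Hs L (Suc n - length L)"
    using assms Hlist_nth_diff[of "length L" n L] by simp
  ultimately show ?thesis
    using assms unfolding Hs_Suc Hnext_def Let_def by simp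
qed

lemma asym_less_nat: "asym {(x::nat, y). x < y}"
  by (auto intro: asymI)

lemma lexless_asym: "lexless x y \<Longrightarrow> \<not> lexless y x"
  unfolding lexless_def using lexord_asymmetric[OF asym_less_nat] by blast

lemma lexless_irrefl: "\<not> lexless x x"
  unfolding lexless_def by (rule lexord_irreflexive) simp

lemma lexless_total: "x \<noteq> y \<Longrightarrow> lexless x y \<or> lexless y x"
proof -
  assume "x \<noteq> y"
  have "\<forall>a b. (a,b) \<in> {(x::nat, y). x < y} \<or> a = b \<or> (b,a) \<in> {(x::nat, y). x < y}" by auto
  from lexord_linear[OF this, of x y] \<open>x \<noteq> y\<close> show ?thesis unfolding lexless_def by blast
qed

lemma lexless_append_same: "lexless (u @ x) (u @ y) \<longleftrightarrow> lexless x y"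
  unfolding lexless_def by (simp add: lexord_same_pref_iff)

lemma lexless_append_Cons_less: "a < b \<Longrightarrow> lexless (u @ a # x) (u @ b # y)"
  unfolding lexless_def by (rule lexord_append_left_rightI) simp

lemma lexless_append_suffix: "lexless u w \<Longrightarrow> length w \<le> length u \<Longrightarrow> lexless (u @ v) (w @ z)"
  unfolding lexless_def by (rule lexord_sufI)

lemma lexless_append_suffixD:
  "lexless (x @ z) (y @ q) \<Longrightarrow> length x = length y \<Longrightarrow> length z = length q \<Longrightarrow> x \<noteq> y \<Longrightarrow> lexless x y"
  unfolding lexless_def by (rule lexord_sufE)

lemma nat_step_crossing:
  fixes f :: "nat \<Rightarrow> nat"
  assumes "f 0 \<le> m" "m < f n"
  shows "\<exists>s<n. f s \<le> m \<and> m < f (Suc s)"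
  using assms
proof (induction n)
  case 0 then show ?case by simp
next
  case (Suc n)
  show ?case
  proof (cases "m < f n")
    case True then show ?thesis using Suc by (meson less_SucI)
  next
    case False then show ?thesis using Suc by (intro exI[of _ n]) auto
  qed
qed

lemma succ_block_eqI:
  assumes "c \<in> Hblocks L s" "lexless b c" "\<And>d. d \<in> Hblocks L s \<Longrightarrow> lexless b d \<Longrightarrow> \<not> lexless d c"
  shows "succ_block L s b = c"
proof -
  have "(THE c. c \<in> Hblocks L s \<and> lexless b c \<and> (\<forall>d \<in> Hblocks L s. lexless b d \<longrightarrow> \<not> lexless d c)) = c"
  proof (rule the_equality)
    fix c' assume c': "c' \<in> Hblocks L s \<and> lexless b c' \<and> (\<forall>d \<in> Hblocks L s. lexless b d \<longrightarrow> \<not> lexless d c')"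
    then have "\<not> lexless c c'" "\<not> lexless c' c" using assms by blast+
    then show "c' = c" using lexless_total by blast
  qed (use assms in blast)
  then show ?thesis unfolding succ_block_def using assms(1,2) by auto
qed

locale numeration_system =
  fixes L :: "nat list"
  assumes length_L_ge2: "2 \<le> length L" and L_first_pos: "0 < L ! 0"
begin

abbreviation "N \<equiv> length L"
abbreviation "H \<equiv> Hs L"
abbreviation "Th \<equiv> theta_seq L"
abbreviation "tp \<equiv> theta_pre L"

lemma N_pos: "1 \<le> N" using length_L_ge2 by simp

lemma theta_seq_eq_aco: "1 \<le> k \<Longrightarrow> k \<le> N \<Longrightarrow> Th k = aco L k"
  unfolding theta_seq_def aco_def by simp

lemma theta_seq_1_pos: "Th 1 > 0" using L_first_pos N_pos unfolding theta_seq_def by simp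

lemma theta_seq_periodic: "1 \<le> k \<Longrightarrow> N dvd t \<Longrightarrow> Th (k + t) = Th k"
  unfolding theta_seq_def
proof -
  assume "1 \<le> k" "N dvd t"
  then have "(k + t - 1) mod N = (k - 1) mod N"
    by (metis Nat.add_diff_assoc2 mod_add_right_eq mod_0 add_0_right dvd_imp_mod_0)
  then show "L ! ((k + t - 1) mod N) = L ! ((k - 1) mod N)" by simp
qed

lemma theta_seq_multiple_N: "1 \<le> t \<Longrightarrow> N dvd t \<Longrightarrow> Th t = aco L N"
proof -
  assume "1 \<le> t" "N dvd t"
  then have "Th t = Th (N + (t - N))" by (simp add: dvd_imp_le)
  also have "\<dots> = aco L N"
    using theta_seq_periodic[of N "t - N"] theta_seq_eq_aco[of N] N_pos \<open>N dvd t\<close> by simp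
  finally show ?thesis .
qed

lemma length_theta_pre[simp]: "length (tp s) = s"
  unfolding theta_pre_def by simp

lemma theta_pre_Suc: "tp (Suc s) = tp s @ [Th (Suc s)]"
  unfolding theta_pre_def by simp

lemma theta_pre_0[simp]: "tp 0 = []"
  unfolding theta_pre_def by simp

lemma nth_theta_pre: "i < s \<Longrightarrow> tp s ! i = Th (Suc i)"
  unfolding theta_pre_def by (simp del: upt_Suc add: nth_map_upt)

lemma take_theta_pre: "j \<le> s \<Longrightarrow> take j (tp s) = tp j"
  unfolding theta_pre_def by (simp del: upt_Suc add: take_map take_upt)

lemma theta_pre_add: "N dvd t \<Longrightarrow> tp (t + u) = tp t @ tp u"
proof (induction u)
  case 0 then show ?case by simp
next
  case (Suc u)
  have "Th (Suc (t + u)) = Th (Suc u)"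
    using theta_seq_periodic[of "Suc u" t] Suc.prems by (simp add: add.commute)
  then show ?case using Suc by (simp add: theta_pre_Suc)
qed

lemma theta_pre_N: "tp N = L"
  by (rule nth_equalityI) (simp_all add: nth_theta_pre theta_seq_def)

(* val e j is the value of the digit string e followed by j zeros. *)
fun val :: "nat list \<Rightarrow> nat \<Rightarrow> nat" where
  "val [] j = 0"
| "val (x # xs) j = x * H (length xs + j + 1) + val xs j"

lemma val_append: "val (u @ v) j = val u (length v + j) + val v j"
  by (induction u) (auto simp: algebra_simps)

lemma val_replicate_zero[simp]: "val (replicate n 0) j = 0"
  by (induction n) auto

lemma val_append_zeros: "val (u @ replicate n 0) j = val u (n + j)"
  by (simp add: val_append)

lemma val_eq_sum: "val xs j = (\<Sum>k=1..length xs. xs ! (k - 1) * H (length xs + j - k + 1))"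
proof (induction xs)
  case Nil then show ?case by simp
next
  case (Cons x xs)
  define l where "l = length xs"
  define g where "g = (\<lambda>k. (x # xs) ! (k - 1) * H (Suc l + j - k + 1))"
  have "(\<Sum>k=1..Suc l. g k) = g 1 + (\<Sum>k=Suc 1..Suc l. g k)"
    by (rule sum.atLeast_Suc_atMost) simp
  also have "(\<Sum>k=Suc 1..Suc l. g k) = (\<Sum>k=1..l. g (Suc k))"
    by (rule sum.shift_bounds_cl_Suc_ivl)
  also have "\<dots> = (\<Sum>k=1..l. xs ! (k - 1) * H (l + j - k + 1))"
    unfolding g_def by (intro sum.cong) (auto simp: nth_Cons')
  finally have "(\<Sum>k=1..Suc l. g k) = x * H (l + j + 1) + (\<Sum>k=1..l. xs ! (k - 1) * H (l + j - k + 1))"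
    unfolding g_def by simp
  then have "(\<Sum>k=1..length (x # xs). (x # xs) ! (k - 1) * H (length (x # xs) + j - k + 1))
      = x * H (length xs + j + 1) + (\<Sum>k=1..length xs. xs ! (k - 1) * H (length xs + j - k + 1))"
    unfolding g_def l_def by simp
  then show ?case using Cons by simp
qed

lemma evalH_eq_val: "evalH L e = val e 0"
  unfolding evalH_def val_eq_sum by (intro sum.cong) auto

lemma H_Suc_eq_val_theta_pre: "H (Suc n) = val (tp n) 0 + 1"
proof (induction n rule: less_induct)
  case (less n)
  show ?case
  proof (cases "n \<le> N")
    case True
    have "H (Suc n) = 1 + (\<Sum>k=1..n. aco L k * H (Suc n - k))"
      using Hs_initial[OF True] .
    also have "(\<Sum>k=1..n. aco L k * H (Suc n - k)) = val (tp n) 0"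
      unfolding val_eq_sum
      by (intro sum.cong) (use True in \<open>auto simp: nth_theta_pre theta_seq_eq_aco Suc_diff_le\<close>)
    finally show ?thesis by simp
  next
    case False
    have "H (Suc n) = (\<Sum>k=1..<N. aco L k * H (Suc n - k)) + (1 + aco L N) * H (Suc n - N)"
      using Hs_recurrence[OF N_pos] False by simp
    moreover have "H (Suc n - N) = val (tp (n - N)) 0 + 1"
      using less[of "n - N"] False N_pos by (simp add: Suc_diff_le)
    moreover have "tp n = tp N @ tp (n - N)"
      using theta_pre_add[of N "n - N"] False by simp
    moreover have "val (tp N) (n - N) = (\<Sum>k=1..<N. aco L k * H (Suc n - k)) + aco L N * H (Suc n - N)"
    proof -
      have "val (tp N) (n - N) = (\<Sum>k=1..N. aco L k * H (Suc n - k))"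
        unfolding val_eq_sum using False
        by (intro sum.cong) (auto simp: nth_theta_pre theta_seq_eq_aco Suc_diff_le)
      also have "\<dots> = (\<Sum>k=1..<N. aco L k * H (Suc n - k)) + aco L N * H (Suc n - N)"
        using N_pos by (simp add: sum.last_plus)
      finally show ?thesis .
    qed
    ultimately show ?thesis by (simp add: val_append algebra_simps)
  qed
qed

definition theta_val :: "nat \<Rightarrow> nat \<Rightarrow> nat" where
  "theta_val n s = val (tp s) (n - s)"

lemma theta_val_Suc: "s < n \<Longrightarrow> theta_val n (Suc s) = theta_val n s + Th (Suc s) * H (n - s)"
  unfolding theta_val_def theta_pre_Suc val_append by (simp add: Suc_diff_Suc algebra_simps)

lemma theta_val_0 [simp]: "theta_val n 0 = 0"
  unfolding theta_val_def by simp

lemma theta_val_full: "theta_val n n + 1 = H (Suc n)"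
  unfolding theta_val_def using H_Suc_eq_val_theta_pre by simp

lemma theta_val_mono: "s \<le> s' \<Longrightarrow> s' \<le> n \<Longrightarrow> theta_val n s \<le> theta_val n s'"
proof (induction s' rule: dec_induct)
  case base then show ?case by simp
next
  case (step m)
  then show ?case using theta_val_Suc[of m n] by simp
qed

lemma val_step_form: "length (tp s @ [c] @ r) = n \<Longrightarrow> val (tp s @ [c] @ r) 0 = theta_val n s + c * H (n - s) + val r 0"
proof -
  assume "length (tp s @ [c] @ r) = n"
  then have "n - s = Suc (length r)" by simp
  then show ?thesis unfolding theta_val_def by (simp add: val_append)
qed

lemma H_1: "H (Suc 0) = 1"
  using H_Suc_eq_val_theta_pre[of 0] by simp

lemma theta_pre_Suc_Cons: "tp (Suc s) = Th 1 # tl (tp (Suc s))"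
  unfolding theta_pre_def by (simp add: upt_rec)

lemma H_Suc_less: "H (Suc n) < H (Suc (Suc n))"
proof -
  have "Th 1 * H (Suc n) \<le> val (tp (Suc n)) 0"
    by (subst theta_pre_Suc_Cons) simp
  moreover have "H (Suc n) \<le> Th 1 * H (Suc n)" using theta_seq_1_pos by simp
  ultimately show ?thesis using H_Suc_eq_val_theta_pre[of "Suc n"] by linarith
qed

lemma H_strict_mono: "1 \<le> m \<Longrightarrow> m < n \<Longrightarrow> H m < H n"
  using lift_Suc_mono_less[of "\<lambda>n. H (Suc n)" "m - 1" "n - 1"] H_Suc_less by simp

lemma H_mono: "1 \<le> m \<Longrightarrow> m \<le> n \<Longrightarrow> H m \<le> H n"
  using H_strict_mono[of m n] by (cases "m = n") auto

lemma H_pos: "1 \<le> n \<Longrightarrow> 1 \<le> H n"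
  using H_mono[of 1 n] H_1 by simp

lemma H_ge_index: "1 \<le> n \<Longrightarrow> n \<le> H n"
proof (induction n rule: dec_induct)
  case base then show ?case using H_1 by simp
next
  case (step n) then show ?case using H_strict_mono[of n "Suc n"] by simp
qed

lemma Hcirc_cases_theta:
  assumes "e \<in> Hcirc L"
  shows "e = tp (length e) \<or> (\<exists>s c r. e = tp s @ [c] @ r \<and> c < Th (Suc s) \<and> r \<in> Hcirc L)"
  using assms by cases auto

lemma Nil_in_Hcirc: "[] \<in> Hcirc L"
  using Hcirc.full[of L 0] by simp

lemma theta_pre_append_eq_Cons_zero: "tp s @ v = 0 # w \<Longrightarrow> s = 0"
proof (cases s)
  case (Suc s')
  assume "tp s @ v = 0 # w"
  then have "Th 1 = 0" using theta_pre_Suc_Cons[of s'] Suc by (metis append_Cons list.inject)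
  then show ?thesis using theta_seq_1_pos by simp
qed

lemma Hcirc_Cons_zeroD:
  assumes "0 # r \<in> Hcirc L" shows "r \<in> Hcirc L"
  using assms
proof (cases rule: Hcirc.cases)
  case (full n)
  then show ?thesis using theta_pre_append_eq_Cons_zero[of n "[]" r] by simp
next
  case (step c s r')
  then show ?thesis using theta_pre_append_eq_Cons_zero[of s "[c] @ r'" r] by simp
qed

lemma Hcirc_snoc_zero: "e \<in> Hcirc L \<Longrightarrow> e @ [0] \<in> Hcirc L"
proof (induction rule: Hcirc.induct)
  case (full n)
  show ?case
  proof (cases "Th (Suc n) > 0")
    case True
    then show ?thesis using Hcirc.step[of 0 L n "[]"] Nil_in_Hcirc by simp
  next
    case False
    then have "tp (Suc n) = tp n @ [0]" by (simp add: theta_pre_Suc)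
    then show ?thesis by (metis Hcirc.full)
  qed
next
  case (step c s r)
  then show ?case using Hcirc.step[of c L s "r @ [0]"] by simp
qed

lemma Hcirc_append_zeros: "e \<in> Hcirc L \<Longrightarrow> e @ replicate j 0 \<in> Hcirc L"
proof (induction j)
  case 0 then show ?case by simp
next
  case (Suc j)
  then show ?case using Hcirc_snoc_zero[of "e @ replicate j 0"]
    by (simp add: replicate_append_same[symmetric])
qed

lemma Hcirc_take: "e \<in> Hcirc L \<Longrightarrow> take j e \<in> Hcirc L"
proof (induction arbitrary: j rule: Hcirc.induct)
  case (full n)
  then show ?case
    using take_theta_pre[of "min j n" n]
    by (metis Hcirc.full min.cobounded2 take_take take_all_iff length_theta_pre nat_le_linear)
next
  case (step c s r)
  show ?case
  proof (cases "j \<le> s")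
    case True
    then show ?thesis by (simp add: take_theta_pre Hcirc.full)
  next
    case False
    then have "take j (tp s @ [c] @ r) = tp s @ [c] @ take (j - s - 1) r"
      by (simp add: take_append) (metis Suc_diff_Suc diff_diff_left not_le take_Suc_Cons plus_1_eq_Suc)
    then show ?thesis using step Hcirc.step by metis
  qed
qed

lemma lexless_theta_step:
  assumes "s' < s" "c' < Th (Suc s')"
  shows "lexless (tp s' @ [c'] @ r') (tp s @ v)"
proof -
  have "tp s = tp s' @ Th (Suc s') # drop (Suc s') (tp s)"
    using assms(1) id_take_nth_drop[of s' "tp s"] by (simp add: take_theta_pre nth_theta_pre)
  then have eq: "tp s @ v = tp s' @ Th (Suc s') # (drop (Suc s') (tp s) @ v)"
    by (metis append.assoc append_Cons)
  show ?thesis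
    unfolding eq using lexless_append_Cons_less[OF assms(2), of "tp s'" r'] by simp
qed

lemma val_step_ge:
  assumes "length (tp s @ [c] @ r) = n"
  shows "theta_val n s + c * H (n - s) \<le> val (tp s @ [c] @ r) 0"
  using val_step_form[OF assms] by simp

lemma val_step_less_next_digit:
  assumes "val r 0 < H (Suc (length r))" "length (tp s @ [c] @ r) = n"
  shows "val (tp s @ [c] @ r) 0 < theta_val n s + Suc c * H (n - s)"
proof -
  have "n - s = Suc (length r)" using assms(2) by auto
  then show ?thesis using val_step_form[OF assms(2)] assms(1) by simp
qed

lemma val_step_less:
  assumes "val r 0 < H (Suc (length r))" "c < Th (Suc s)" "length (tp s @ [c] @ r) = n"
  shows "val (tp s @ [c] @ r) 0 < theta_val n (Suc s)"
proof -
  have "val (tp s @ [c] @ r) 0 < theta_val n s + Suc c * H (n - s)"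
    by (rule val_step_less_next_digit[OF assms(1,3)])
  also have "\<dots> \<le> theta_val n s + Th (Suc s) * H (n - s)"
    using assms(2) by (intro add_left_mono mult_right_mono) auto
  also have "\<dots> = theta_val n (Suc s)" using theta_val_Suc assms(3) by simp
  finally show ?thesis .
qed

lemma val_Hcirc_less_H: "e \<in> Hcirc L \<Longrightarrow> val e 0 < H (Suc (length e))"
proof (induction rule: Hcirc.induct)
  case (full n)
  then show ?case using theta_val_full[of n] unfolding theta_val_def by simp
next
  case (step c s r)
  define n where "n = length (tp s @ [c] @ r)"
  have "val (tp s @ [c] @ r) 0 < theta_val n (Suc s)"
    using val_step_less[OF step.IH step.hyps(1)] n_def by simp
  also have "\<dots> \<le> theta_val n n" using theta_val_mono n_def by simp
  also have "\<dots> < H (Suc n)" using theta_val_full[of n] by simp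
  finally show ?case unfolding n_def .
qed

lemma val_less_of_lexless_step:
  assumes e: "e = tp s @ [c] @ r" "c < Th (Suc s)" "r \<in> Hcirc L"
    and e': "e' \<in> Hcirc L" "length e' = length e" "lexless e e'"
    and IH: "\<And>r'. r' \<in> Hcirc L \<Longrightarrow> length r' = length r \<Longrightarrow> lexless r r' \<Longrightarrow> val r 0 < val r' 0"
  shows "val e 0 < val e' 0"
proof -
  define n where "n = length e"
  have below_next: "val e 0 < theta_val n s + Suc c * H (n - s)"
    using val_step_less_next_digit[OF val_Hcirc_less_H[OF e(3)]] e(1) n_def by simp
  have upper: "val e 0 < theta_val n (Suc s)"
    using val_step_less[OF val_Hcirc_less_H[OF e(3)] e(2)] e(1) n_def by simp
  have not_above: "\<not> lexless e' e" using e'(3) lexless_asym by blast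
  from Hcirc_cases_theta[OF e'(1)] show ?thesis
  proof
    assume "e' = tp (length e')"
    then have "val e' 0 = theta_val n n" using e'(2) n_def unfolding theta_val_def by simp
    moreover have "theta_val n (Suc s) \<le> theta_val n n" using theta_val_mono e(1) n_def by simp
    ultimately show ?thesis using upper by simp
  next
    assume "\<exists>s c r. e' = tp s @ [c] @ r \<and> c < Th (Suc s) \<and> r \<in> Hcirc L"
    then obtain s' c' r' where e'': "e' = tp s' @ [c'] @ r'" "c' < Th (Suc s')" "r' \<in> Hcirc L" by blast
    have lower: "theta_val n s' + c' * H (n - s') \<le> val e' 0"
      using val_step_ge[of s' c' r' n] e'(2) e'' n_def by simp
    have "\<not> s' < s" using lexless_theta_step[OF _ e''(2)] not_above e(1) e''(1) by blast
    moreover have "c \<le> c'" if "s' = s"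
      using lexless_append_Cons_less[of c' c "tp s" r' r] not_above e(1) e''(1) that by force
    ultimately consider "s < s'" | "s' = s" "c < c'" | "s' = s" "c' = c" by fastforce
    then show ?thesis
    proof cases
      case 1
      then have "theta_val n (Suc s) \<le> theta_val n s'" using theta_val_mono e'(2) e'' n_def by simp
      then show ?thesis using upper lower by simp
    next
      case 2
      then have "theta_val n s + Suc c * H (n - s) \<le> theta_val n s' + c' * H (n - s')"
        by (simp add: mult_right_mono del: mult_Suc)
      then show ?thesis using below_next lower by simp
    next
      case 3
      then have "lexless r r'" "length r' = length r"
        using e'(2,3) e(1) e''(1) lexless_append_same[of "tp s @ [c]" r r'] by auto
      then have "val r 0 < val r' 0" using IH e''(3) by blast
      then show ?thesis using val_step_form[of s c r n] val_step_form[of s c r' n] e(1) e''(1) e'(2) 3 n_def by simp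
    qed
  qed
qed

lemma val_strict_mono_lex:
  assumes "e \<in> Hcirc L" "e' \<in> Hcirc L" "length e = length e'" "lexless e e'"
  shows "val e 0 < val e' 0"
  using assms
proof (induction "length e" arbitrary: e e' rule: less_induct)
  case less
  from Hcirc_cases_theta[OF less.prems(1)] show ?case
  proof
    assume e: "e = tp (length e)"
    have "e' \<noteq> tp (length e')" using e less.prems(3,4) lexless_irrefl by metis
    then obtain s' c' r' where e': "e' = tp s' @ [c'] @ r'" "c' < Th (Suc s')"
      using Hcirc_cases_theta[OF less.prems(2)] by blast
    then have "lexless e' e" using lexless_theta_step[of s' "length e" c' r' "[]"] e less.prems(3) by simp
    then show ?case using less.prems(4) lexless_asym by blast
  next
    assume "\<exists>s c r. e = tp s @ [c] @ r \<and> c < Th (Suc s) \<and> r \<in> Hcirc L"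
    then obtain s c r where e: "e = tp s @ [c] @ r" "c < Th (Suc s)" "r \<in> Hcirc L" by blast
    show ?case
      by (rule val_less_of_lexless_step[OF e less.prems(2) less.prems(3)[symmetric] less.prems(4)])
        (use less.hyps e in auto)
  qed
qed

lemma val_inj_Hcirc:
  assumes "e \<in> Hcirc L" "e' \<in> Hcirc L" "length e = length e'" "val e 0 = val e' 0"
  shows "e = e'"
proof (rule ccontr)
  assume "e \<noteq> e'"
  then have "lexless e e' \<or> lexless e' e" by (rule lexless_total)
  then show False using val_strict_mono_lex[OF assms(1-3)] val_strict_mono_lex[OF assms(2,1)] assms(3,4) by auto
qed

lemma lexless_iff_val_less:
  assumes "e \<in> Hcirc L" "e' \<in> Hcirc L" "length e = length e'"
  shows "lexless e e' \<longleftrightarrow> val e 0 < val e' 0"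
proof
  assume "lexless e e'" then show "val e 0 < val e' 0" using val_strict_mono_lex assms by blast
next
  assume lt: "val e 0 < val e' 0"
  then have "e \<noteq> e'" by auto
  then have "lexless e e' \<or> lexless e' e" by (rule lexless_total)
  then show "lexless e e'" using val_strict_mono_lex[OF assms(2,1)] assms(3) lt by auto
qed

lemma val_Hcirc_surj: "m < H (Suc n) \<Longrightarrow> \<exists>e. e \<in> Hcirc L \<and> length e = n \<and> val e 0 = m"
proof (induction n arbitrary: m rule: less_induct)
  case (less n)
  show ?case
  proof (cases "m = theta_val n n")
    case True
    then show ?thesis using Hcirc.full[of L n] unfolding theta_val_def by (intro exI[of _ "tp n"]) simp
  next
    case False
    then have "m < theta_val n n" using less.prems theta_val_full[of n] by simp
    then obtain s where s: "s < n" "theta_val n s \<le> m" "m < theta_val n (Suc s)"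
      using nat_step_crossing[of "theta_val n" m n] by auto
    define h where "h = H (n - s)"
    have "1 \<le> n - s" using s(1) by simp
    then have "1 \<le> H (n - s)" by (rule H_pos)
    then have hpos: "h > 0" unfolding h_def by simp
    define c where "c = (m - theta_val n s) div h"
    define \<rho> where "\<rho> = (m - theta_val n s) mod h"
    have "m - theta_val n s < Th (Suc s) * h" using s theta_val_Suc[of s n] unfolding h_def by simp
    then have c: "c < Th (Suc s)" unfolding c_def by (simp add: less_mult_imp_div_less)
    have "\<rho> < h" unfolding \<rho>_def using hpos by simp
    then have "\<rho> < H (Suc (n - s - 1))" unfolding h_def using s(1) by (simp add: Suc_diff_Suc)
    then obtain r where r: "r \<in> Hcirc L" "length r = n - s - 1" "val r 0 = \<rho>"
      using less.IH[of "n - s - 1"] s(1) by auto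
    have len: "length (tp s @ [c] @ r) = n" using r(2) s(1) by simp
    have "val (tp s @ [c] @ r) 0 = theta_val n s + c * h + \<rho>" using val_step_form[OF len] r(3) unfolding h_def by simp
    also have "\<dots> = m" unfolding c_def \<rho>_def using s(2) by simp
    finally show ?thesis using len Hcirc.step[OF c r(1)] by blast
  qed
qed

lemma Hcirc_Cons_pos:
  assumes "x # xs \<in> Hcirc L" "H (Suc (length xs)) \<le> val (x # xs) 0"
  shows "0 < x"
proof (rule ccontr)
  assume "\<not> 0 < x"
  then have "val (x # xs) 0 = val xs 0" "xs \<in> Hcirc L" using assms(1) Hcirc_Cons_zeroD by auto
  then show False using val_Hcirc_less_H[of xs] assms(2) by simp
qed

lemma Hadm_val_bounds:
  assumes "e \<in> Hadm L"
  shows "1 \<le> length e" "H (length e) \<le> val e 0" "val e 0 < H (Suc (length e))"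
proof -
  from assms have e: "e \<in> Hcirc L" "e \<noteq> []" "hd e > 0" unfolding Hadm_def by auto
  obtain x xs where x: "e = x # xs" using e(2) by (meson neq_Nil_conv)
  show "1 \<le> length e" using x by simp
  have "x \<ge> 1" using e x by simp
  then have "H (length e) \<le> x * H (length e)" by simp
  also have "\<dots> \<le> val e 0" using x by simp
  finally show "H (length e) \<le> val e 0" .
  show "val e 0 < H (Suc (length e))" using val_Hcirc_less_H e by simp
qed

lemma H_interval_unique:
  assumes "1 \<le> M" "1 \<le> M'" "H M \<le> m" "m < H (Suc M)" "H M' \<le> m" "m < H (Suc M')"
  shows "M = M'"
proof (rule ccontr)
  assume "M \<noteq> M'"
  then consider "M < M'" | "M' < M" by linarith
  then show False
  proof cases
    case 1 then have "H (Suc M) \<le> H M'" using H_mono by simp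
    then show False using assms by simp
  next
    case 2 then have "H (Suc M') \<le> H M" using H_mono by simp
    then show False using assms by simp
  qed
qed

lemma Hadm_val_inj:
  assumes "e \<in> Hadm L" "e' \<in> Hadm L" "val e 0 = val e' 0"
  shows "e = e'"
proof -
  have "length e = length e'"
    using H_interval_unique[OF Hadm_val_bounds(1)[OF assms(1)] Hadm_val_bounds(1)[OF assms(2)]]
      Hadm_val_bounds(2,3)[OF assms(1)] Hadm_val_bounds(2,3)[OF assms(2)] assms(3) by simp
  then show ?thesis using val_inj_Hcirc assms unfolding Hadm_def by auto
qed

lemma Hadm_val_surj:
  assumes "1 \<le> m"
  shows "\<exists>e. e \<in> Hadm L \<and> val e 0 = m"
proof -
  have "H (Suc 0) \<le> m" "m < H (Suc m)" using assms H_1 H_ge_index[of "Suc m"] by auto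
  then obtain s where s: "H (Suc s) \<le> m" "m < H (Suc (Suc s))"
    using nat_step_crossing[of "\<lambda>k. H (Suc k)" m m] by auto
  obtain e where e: "e \<in> Hcirc L" "length e = Suc s" "val e 0 = m"
    using val_Hcirc_surj[OF s(2)] by blast
  obtain x xs where x: "e = x # xs" using e(2) by (cases e) simp_all
  have "0 < x" using Hcirc_Cons_pos[of x xs] e s x by simp
  then show ?thesis using e x unfolding Hadm_def by auto
qed

lemma expansion_val: "e \<in> Hadm L \<Longrightarrow> expansion L (val e 0) = e"
  unfolding expansion_def evalH_eq_val
  by (rule the_equality) (auto intro: Hadm_val_inj)

lemma expansion_in_Hadm: "1 \<le> m \<Longrightarrow> expansion L m \<in> Hadm L"
  using Hadm_val_surj expansion_val by metis

lemma val_expansion: "1 \<le> m \<Longrightarrow> val (expansion L m) 0 = m"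
  using Hadm_val_surj expansion_val by metis

definition pad :: "nat \<Rightarrow> nat list \<Rightarrow> nat list" where
  "pad s x = (if N \<le> s then x else x @ replicate (N - s) 0)"

lemma pad_inj: "length x = length y \<Longrightarrow> pad s x = pad s y \<Longrightarrow> x = y"
  unfolding pad_def by (auto split: if_splits)

lemma lexless_pad_iff: "length x = length y \<Longrightarrow> lexless (pad s x) (pad s y) \<longleftrightarrow> lexless x y"
proof
  assume l: "length x = length y" and a: "lexless (pad s x) (pad s y)"
  show "lexless x y"
  proof (cases "x = y")
    case True then show ?thesis using a lexless_irrefl by simp
  next
    case False then show ?thesis using a l unfolding pad_def
      by (auto split: if_splits intro: lexless_append_suffixD)
  qed
next
  assume l: "length x = length y" and a: "lexless x y"
  then show "lexless (pad s x) (pad s y)" unfolding pad_def using lexless_append_suffix[OF a] by auto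
qed

lemma LB_eq_expansion:
  "LB L s m = (if length (expansion L m) < s then None else Some (pad s (take s (expansion L m))))"
  unfolding LB_def pad_def Let_def by auto

definition raw_blocks :: "nat \<Rightarrow> nat list set" where
  "raw_blocks s = {p. p \<in> Hcirc L \<and> length p = s \<and> 0 < hd p}"

lemma raw_blocks_Hadm: "1 \<le> s \<Longrightarrow> p \<in> raw_blocks s \<Longrightarrow> p \<in> Hadm L"
  unfolding raw_blocks_def Hadm_def by auto

lemma take_in_raw_blocks: "1 \<le> s \<Longrightarrow> s \<le> length e \<Longrightarrow> e \<in> Hadm L \<Longrightarrow> take s e \<in> raw_blocks s"
  using Hcirc_take[of e s] unfolding raw_blocks_def Hadm_def by (auto simp: hd_take)

lemma Hblocks_eq_pad_raw_blocks:
  assumes "1 \<le> s"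
  shows "Hblocks L s = pad s ` raw_blocks s"
proof
  show "Hblocks L s \<subseteq> pad s ` raw_blocks s"
  proof
    fix b assume "b \<in> Hblocks L s"
    then obtain m where m: "1 \<le> m" "LB L s m = Some b" unfolding Hblocks_def by auto
    define e where "e = expansion L m"
    have e: "e \<in> Hadm L" using expansion_in_Hadm[OF m(1)] e_def by simp
    have les: "s \<le> length e" and b: "b = pad s (take s e)"
      using m(2) LB_eq_expansion[of s m] e_def by (auto split: if_splits)
    have "take s e \<in> raw_blocks s" using take_in_raw_blocks[OF assms les e] .
    then show "b \<in> pad s ` raw_blocks s" using b by simp
  qed
next
  show "pad s ` raw_blocks s \<subseteq> Hblocks L s"
  proof
    fix b assume "b \<in> pad s ` raw_blocks s"
    then obtain p where p: "p \<in> raw_blocks s" "b = pad s p" by auto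
    have pa: "p \<in> Hadm L" using raw_blocks_Hadm[OF assms p(1)] .
    define m where "m = val p 0"
    have m1: "1 \<le> m" using Hadm_val_bounds[OF pa] H_pos unfolding m_def by (meson order_trans)
    have "expansion L m = p" unfolding m_def by (rule expansion_val[OF pa])
    then have "LB L s m = Some b" using LB_eq_expansion[of s m] p unfolding raw_blocks_def by simp
    then show "b \<in> Hblocks L s" unfolding Hblocks_def using m1 by auto
  qed
qed

lemma val_prefix_le:
  assumes "length e = M" "s \<le> M" "take s e = p"
  shows "val p (M - s) \<le> val e 0"
proof -
  have "e = p @ drop s e" using assms(3) by (metis append_take_drop_id)
  then have "val e 0 = val p (M - s) + val (drop s e) 0"
    using assms(1) val_append[of p "drop s e" 0] by simp
  then show ?thesis by simp
qed

lemma val_less_of_lexless_prefix: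
  assumes "e \<in> Hcirc L" "length e = M" "s \<le> M" "take s e = p"
    and "q \<in> Hcirc L" "length q = s" "lexless p q"
  shows "val e 0 < val q (M - s)"
proof -
  have lp: "length p = s" using assms by auto
  have qz: "q @ replicate (M - s) 0 \<in> Hcirc L" using Hcirc_append_zeros assms by metis
  have e: "e = p @ drop s e" using assms(4) by (metis append_take_drop_id)
  have "lexless e (q @ replicate (M - s) 0)"
    using lexless_append_suffix[OF assms(7), of "drop s e" "replicate (M - s) 0"] e lp assms(6) by simp
  then have "val e 0 < val (q @ replicate (M - s) 0) 0"
    using val_strict_mono_lex[OF assms(1) qz] assms by simp
  then show ?thesis using val_append_zeros[of q "M - s" 0] by simp
qed

lemma raw_blocksD: "p \<in> raw_blocks s \<Longrightarrow> p \<in> Hcirc L \<and> length p = s"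
  unfolding raw_blocks_def by auto

lemma raw_block_succ_exists:
  assumes "1 \<le> s" "p \<in> raw_blocks s" "p \<noteq> tp s"
  shows "\<exists>p'. p' \<in> raw_blocks s \<and> val p' 0 = val p 0 + 1"
proof -
  have p: "p \<in> Hcirc L" "length p = s" using raw_blocksD[OF assms(2)] by auto
  have "val p 0 \<noteq> val (tp s) 0"
    using val_inj_Hcirc[OF p(1) Hcirc.full[of L s]] p assms(3) by auto
  moreover have "val p 0 < H (Suc s)" using val_Hcirc_less_H[OF p(1)] p by simp
  ultimately have "val p 0 + 1 < H (Suc s)" using H_Suc_eq_val_theta_pre[of s] by simp
  then obtain p' where p': "p' \<in> Hcirc L" "length p' = s" "val p' 0 = val p 0 + 1"
    using val_Hcirc_surj by blast
  obtain x xs where x: "p' = x # xs" using p'(2) assms(1) by (cases p') auto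
  have "H s \<le> val p 0" using Hadm_val_bounds(2)[OF raw_blocks_Hadm[OF assms(1,2)]] p by simp
  then have "0 < x" using Hcirc_Cons_pos[of x xs] p' x by simp
  then show ?thesis using p' x unfolding raw_blocks_def by auto
qed

lemma succ_block_pad_nonmax:
  assumes "1 \<le> s" "p \<in> raw_blocks s" "p' \<in> raw_blocks s" "val p' 0 = val p 0 + 1"
  shows "succ_block L s (pad s p) = pad s p'"
proof (rule succ_block_eqI)
  have p: "p \<in> Hcirc L" "length p = s" and p': "p' \<in> Hcirc L" "length p' = s"
    using raw_blocksD[OF assms(2)] raw_blocksD[OF assms(3)] by auto
  have blocks: "Hblocks L s = pad s ` raw_blocks s" by (rule Hblocks_eq_pad_raw_blocks[OF assms(1)])
  then show "pad s p' \<in> Hblocks L s" using assms(3) by simp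
  show "lexless (pad s p) (pad s p')"
    using lexless_iff_val_less[OF p(1) p'(1)] lexless_pad_iff p p' assms(4) by simp
  fix d assume d: "d \<in> Hblocks L s" "lexless (pad s p) d"
  then obtain q where q: "q \<in> Hcirc L" "length q = s" "d = pad s q"
    using blocks raw_blocksD by blast
  have "val p 0 < val q 0" using d(2) q lexless_iff_val_less[OF p(1) q(1)] lexless_pad_iff p by simp
  then show "\<not> lexless d (pad s p')"
    using q lexless_iff_val_less[OF q(1) p'(1)] lexless_pad_iff p' assms(4) by simp
qed

lemma succ_block_pad_theta:
  assumes "1 \<le> s"
  shows "succ_block L s (pad s (tp s)) = exclusive_block L s"
proof -
  have "\<not> (\<exists>c \<in> Hblocks L s. lexless (pad s (tp s)) c)"
  proof
    assume "\<exists>c \<in> Hblocks L s. lexless (pad s (tp s)) c"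
    then obtain q where q: "q \<in> raw_blocks s" "lexless (pad s (tp s)) (pad s q)"
      using Hblocks_eq_pad_raw_blocks[OF assms] by auto
    have q': "q \<in> Hcirc L" "length q = s" using raw_blocksD[OF q(1)] by auto
    have "lexless (tp s) q" using q(2) lexless_pad_iff q' by simp
    then have "val (tp s) 0 < val q 0" using lexless_iff_val_less[OF Hcirc.full q'(1)] q' by simp
    moreover have "val q 0 < H (Suc s)" using val_Hcirc_less_H[OF q'(1)] q' by simp
    ultimately show False using H_Suc_eq_val_theta_pre[of s] by simp
  qed
  then show ?thesis unfolding succ_block_def by simp
qed

lemma theta_val_period:
  assumes "N dvd t" "t \<le> M"
  shows "theta_val M t + H (Suc M - t) = H (Suc M)"
proof -
  have "tp M = tp t @ tp (M - t)" using theta_pre_add[OF assms(1), of "M - t"] assms(2) by simp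
  then have "val (tp M) 0 = val (tp t) (M - t) + val (tp (M - t)) 0" by (simp add: val_append)
  moreover have "H (Suc M) = val (tp M) 0 + 1" by (rule H_Suc_eq_val_theta_pre)
  moreover have "H (Suc (M - t)) = val (tp (M - t)) 0 + 1" by (rule H_Suc_eq_val_theta_pre)
  ultimately show ?thesis unfolding theta_val_def using assms(2) by (simp add: Suc_diff_le)
qed

lemma exclusive_block_form:
  assumes "1 \<le> s"
  shows "\<exists>t p0. N dvd t \<and> 1 \<le> t \<and> s \<le> t + p0 \<and>
     exclusive_block L s = tp (t - 1) @ [Th t + 1] @ replicate p0 0"
proof (cases "N \<le> s")
  case True
  define p0 where "p0 = s mod N"
  define t where "t = s - p0"
  have dvd: "N dvd t" unfolding t_def p0_def by (simp add: minus_mod_eq_mult_div)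
  have "p0 < N" unfolding p0_def using N_pos by (intro mod_less_divisor) linarith
  then have t1: "1 \<le> t" using True unfolding t_def by simp
  have "take (s - p0 - 1) (tp (s - p0)) = tp (t - 1)" unfolding t_def by (simp add: take_theta_pre)
  moreover have "aco L N = Th t" using theta_seq_multiple_N[OF t1 dvd] by simp
  ultimately have "exclusive_block L s = tp (t - 1) @ [Th t + 1] @ replicate p0 0"
    unfolding exclusive_block_def Let_def p0_def using True by simp
  moreover have "s \<le> t + p0" unfolding t_def p0_def by simp
  ultimately show ?thesis using dvd t1 by blast
next
  case False
  have "Suc (N - 1) = N" using N_pos by simp
  then have "L = tp (N - 1) @ [Th N]" using theta_pre_N theta_pre_Suc[of "N - 1"] by simp
  then have "butlast L = tp (N - 1)" "last L = Th N" by (metis butlast_snoc, metis last_snoc)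
  then have "exclusive_block L s = tp (N - 1) @ [Th N + 1] @ replicate 0 0"
    unfolding exclusive_block_def Let_def using False by simp
  then show ?thesis using False N_pos by (intro exI[of _ N] exI[of _ 0]) auto
qed

lemma val_exclusive_block:
  assumes "1 \<le> s"
  shows "\<exists>l. s \<le> l \<and> length (exclusive_block L s) = l \<and>
           (\<forall>j. val (exclusive_block L s) j = H (Suc (l + j)))"
proof -
  obtain t p0 where tp0: "N dvd t" "1 \<le> t" "s \<le> t + p0"
    "exclusive_block L s = tp (t - 1) @ [Th t + 1] @ replicate p0 0"
    using exclusive_block_form[OF assms] by blast
  have "val (exclusive_block L s) j = H (Suc (t + p0 + j))" for j
  proof -
    have tt: "tp t = tp (t - 1) @ [Th t]" using theta_pre_Suc[of "t - 1"] tp0(2) by simp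
    have "val (exclusive_block L s) j = val (tp (t - 1)) (Suc (p0 + j)) + (Th t + 1) * H (Suc (p0 + j))"
      unfolding tp0(4) by (simp add: val_append algebra_simps)
    also have "\<dots> = val (tp t) (p0 + j) + H (Suc (p0 + j))"
      unfolding tt by (simp add: val_append algebra_simps)
    also have "\<dots> = theta_val (t + p0 + j) t + H (Suc (t + p0 + j) - t)" unfolding theta_val_def by simp
    also have "\<dots> = H (Suc (t + p0 + j))" using theta_val_period[OF tp0(1), of "t + p0 + j"] by simp
    finally show ?thesis .
  qed
  moreover have "length (exclusive_block L s) = t + p0" unfolding tp0(4) using tp0(2) by simp
  ultimately show ?thesis using tp0(3) by (intro exI[of _ "t + p0"]) simp
qed

definition next_block :: "nat \<Rightarrow> nat list \<Rightarrow> nat list" where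
  "next_block s p = (SOME p'. p' \<in> raw_blocks s \<and> val p' 0 = val p 0 + 1)"

lemma next_block:
  assumes "1 \<le> s" "p \<in> raw_blocks s" "p \<noteq> tp s"
  shows "next_block s p \<in> raw_blocks s" "val (next_block s p) 0 = val p 0 + 1"
  using someI_ex[OF raw_block_succ_exists[OF assms]] unfolding next_block_def by auto

definition upper_end :: "nat \<Rightarrow> nat list \<Rightarrow> nat \<Rightarrow> nat" where
  "upper_end s p M = (if p = tp s then H (Suc M) else val (next_block s p) (M - s))"

lemma val_shift_strict_mono_lex:
  assumes "p \<in> Hcirc L" "q \<in> Hcirc L" "length p = length q" "lexless p q"
  shows "val p j < val q j"
proof -
  have "lexless (p @ replicate j 0) (q @ replicate j 0)"
    using lexless_append_suffix[OF assms(4)] assms(3) by simp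
  then have "val (p @ replicate j 0) 0 < val (q @ replicate j 0) 0"
    using val_strict_mono_lex Hcirc_append_zeros assms(1-3) by simp
  then show ?thesis by (simp add: val_append_zeros)
qed

lemma raw_block_zeros_Hadm:
  assumes "1 \<le> s" "p \<in> raw_blocks s"
  shows "p @ replicate j 0 \<in> Hadm L"
  using assms Hcirc_append_zeros[of p j] unfolding raw_blocks_def Hadm_def by (auto simp: hd_append)

lemma H_le_val_block: "1 \<le> s \<Longrightarrow> p \<in> raw_blocks s \<Longrightarrow> s \<le> M \<Longrightarrow> H M \<le> val p (M - s)"
  using Hadm_val_bounds(2)[OF raw_block_zeros_Hadm[of s p "M - s"]] raw_blocksD[of p s]
  by (simp add: val_append_zeros)

lemma upper_end_le_H:
  assumes "1 \<le> s" "p \<in> raw_blocks s" "s \<le> M"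
  shows "upper_end s p M \<le> H (Suc M)"
proof (cases "p = tp s")
  case False
  have "next_block s p \<in> raw_blocks s" using next_block[OF assms(1,2) False] by simp
  then have "val (next_block s p @ replicate (M - s) 0) 0 < H (Suc M)"
    using Hadm_val_bounds(3)[OF raw_block_zeros_Hadm[OF assms(1)], of "next_block s p" "M - s"]
      raw_blocksD[of "next_block s p" s] assms(3) by simp
  then show ?thesis unfolding upper_end_def using False by (simp add: val_append_zeros)
qed (simp add: upper_end_def)

lemma val_window_take:
  assumes "1 \<le> s" "e \<in> Hcirc L" "length e = M" "s \<le> M" "p \<in> raw_blocks s" "take s e = p"
  shows "val p (M - s) \<le> val e 0" "val e 0 < upper_end s p M"
proof -
  show "val p (M - s) \<le> val e 0" using val_prefix_le[OF assms(3,4,6)] .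
  show "val e 0 < upper_end s p M"
  proof (cases "p = tp s")
    case True
    then show ?thesis unfolding upper_end_def using val_Hcirc_less_H[OF assms(2)] assms(3) by simp
  next
    case False
    note p' = next_block[OF assms(1,5) False]
    have "lexless p (next_block s p)"
      using lexless_iff_val_less p'(2) raw_blocksD[OF assms(5)] raw_blocksD[OF p'(1)] by simp
    then show ?thesis
      unfolding upper_end_def using False val_less_of_lexless_prefix[OF assms(2-4,6)] raw_blocksD[OF p'(1)] by simp
  qed
qed

lemma val_block_less_upper_end:
  assumes "1 \<le> s" "p \<in> raw_blocks s" "s \<le> M"
  shows "val p (M - s) < upper_end s p M"
proof -
  have "p @ replicate (M - s) 0 \<in> Hcirc L" "length (p @ replicate (M - s) 0) = M"
    using raw_block_zeros_Hadm[OF assms(1,2)] raw_blocksD[OF assms(2)] assms(3) by (auto simp: Hadm_def)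
  from val_window_take(2)[OF assms(1) this assms(3,2)] raw_blocksD[OF assms(2)]
  show ?thesis by (simp add: val_append_zeros)
qed

lemma upper_end_le_val_block:
  assumes "1 \<le> s" "p \<in> raw_blocks s" "q \<in> raw_blocks s" "lexless p q"
  shows "upper_end s p M \<le> val q (M - s)"
proof -
  have p: "p \<in> Hcirc L" "length p = s" and q: "q \<in> Hcirc L" "length q = s"
    using raw_blocksD assms(2,3) by auto
  have pq: "val p 0 < val q 0" using lexless_iff_val_less[OF p(1) q(1)] p q assms(4) by simp
  have "p \<noteq> tp s" using pq val_Hcirc_less_H[OF q(1)] q H_Suc_eq_val_theta_pre[of s] by auto
  note p' = next_block[OF assms(1,2) this]
  have np: "next_block s p \<in> Hcirc L" "length (next_block s p) = s" using raw_blocksD[OF p'(1)] by auto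
  have "val (next_block s p) (M - s) \<le> val q (M - s)"
  proof (cases "val (next_block s p) 0 = val q 0")
    case True
    then show ?thesis using val_inj_Hcirc[OF np(1) q(1)] np q by simp
  next
    case False
    then have "lexless (next_block s p) q" using lexless_iff_val_less[OF np(1) q(1)] np q pq p'(2) by simp
    then show ?thesis using val_shift_strict_mono_lex[OF np(1) q(1)] np q by (simp add: less_imp_le)
  qed
  then show ?thesis unfolding upper_end_def using \<open>p \<noteq> tp s\<close> by simp
qed

lemma take_eq_iff_val_window:
  assumes "1 \<le> s" "p \<in> raw_blocks s" "e \<in> Hadm L" "length e = M" "s \<le> M"
  shows "take s e = p \<longleftrightarrow> val p (M - s) \<le> val e 0 \<and> val e 0 < upper_end s p M"
proof
  have e: "e \<in> Hcirc L" using assms(3) by (simp add: Hadm_def)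
  show "take s e = p \<Longrightarrow> val p (M - s) \<le> val e 0 \<and> val e 0 < upper_end s p M"
    using val_window_take[OF assms(1) e assms(4,5,2)] by simp
  assume window: "val p (M - s) \<le> val e 0 \<and> val e 0 < upper_end s p M"
  define q where "q = take s e"
  have q: "q \<in> raw_blocks s" unfolding q_def using take_in_raw_blocks assms by simp
  note q_window = val_window_take[OF assms(1) e assms(4,5) q q_def[symmetric]]
  show "take s e = p"
  proof (rule ccontr)
    assume "take s e \<noteq> p"
    then consider "lexless q p" | "lexless p q" using lexless_total unfolding q_def by blast
    then show False
    proof cases
      case 1
      then show False using upper_end_le_val_block[OF assms(1) q assms(2) 1, of M] q_window window by linarith
    next
      case 2
      then show False using upper_end_le_val_block[OF assms(1,2) q 2, of M] q_window window by linarith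
    qed
  qed
qed

lemma LB_eq_pad_iff:
  assumes "1 \<le> s" "p \<in> raw_blocks s" "1 \<le> m"
  shows "LB L s m = Some (pad s p) \<longleftrightarrow> (\<exists>M\<ge>s. val p (M - s) \<le> m \<and> m < upper_end s p M)"
proof -
  define e where "e = expansion L m"
  have e: "e \<in> Hadm L" "val e 0 = m" using expansion_in_Hadm[OF assms(3)] val_expansion[OF assms(3)] e_def by auto
  have LB: "LB L s m = Some (pad s p) \<longleftrightarrow> s \<le> length e \<and> take s e = p"
    using LB_eq_expansion[of s m] pad_inj[of "take s e" p s] raw_blocksD[OF assms(2)]
    unfolding e_def by auto
  show ?thesis
  proof
    assume "LB L s m = Some (pad s p)"
    then show "\<exists>M\<ge>s. val p (M - s) \<le> m \<and> m < upper_end s p M"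
      using LB take_eq_iff_val_window[OF assms(1,2) e(1)] e(2) by blast
  next
    assume "\<exists>M\<ge>s. val p (M - s) \<le> m \<and> m < upper_end s p M"
    then obtain M where M: "s \<le> M" "val p (M - s) \<le> m" "m < upper_end s p M" by blast
    have "H M \<le> m" "m < H (Suc M)"
      using H_le_val_block[OF assms(1,2) M(1)] upper_end_le_H[OF assms(1,2) M(1)] M by auto
    then have "length e = M"
      using H_interval_unique[OF Hadm_val_bounds(1)[OF e(1)]] Hadm_val_bounds(2,3)[OF e(1)] e(2) assms(1) M(1)
      by simp
    then show "LB L s m = Some (pad s p)"
      using LB take_eq_iff_val_window[OF assms(1,2) e(1)] e(2) M by simp
  qed
qed

lemma succ_block_pad:
  assumes "1 \<le> s" "p \<in> raw_blocks s"
  shows "succ_block L s (pad s p) = (if p = tp s then exclusive_block L s else pad s (next_block s p))"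
  using succ_block_pad_theta[OF assms(1)] succ_block_pad_nonmax[OF assms next_block[OF assms]] by auto

end

section \<open>Convex recurrences converge\<close>

definition window_vals :: "(nat \<Rightarrow> real) \<Rightarrow> nat \<Rightarrow> nat \<Rightarrow> real set" where
  "window_vals r N n = r ` {n - N..<n}"

definition window_max :: "(nat \<Rightarrow> real) \<Rightarrow> nat \<Rightarrow> nat \<Rightarrow> real" where
  "window_max r N n = Max (window_vals r N n)"

definition window_min :: "(nat \<Rightarrow> real) \<Rightarrow> nat \<Rightarrow> nat \<Rightarrow> real" where
  "window_min r N n = Min (window_vals r N n)"

lemma finite_window_vals: "finite (window_vals r N n)"
  unfolding window_vals_def by simp

lemma window_vals_eq_empty_iff: "window_vals r N n = {} \<longleftrightarrow> N = 0 \<or> n = 0"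
  unfolding window_vals_def by auto

lemma window_vals_uminus: "window_vals (\<lambda>n. - r n) N n = uminus ` window_vals r N n"
  unfolding window_vals_def by (simp add: image_image)

lemma window_max_uminus: "0 < N \<Longrightarrow> 0 < n \<Longrightarrow> window_max (\<lambda>n. - r n) N n = - window_min r N n"
  unfolding window_max_def window_min_def window_vals_uminus
  using finite_window_vals window_vals_eq_empty_iff by simp

lemma window_min_uminus: "0 < N \<Longrightarrow> 0 < n \<Longrightarrow> window_min (\<lambda>n. - r n) N n = - window_max r N n"
  unfolding window_max_def window_min_def window_vals_uminus
  using finite_window_vals window_vals_eq_empty_iff by simp

locale convex_recurrence =
  fixes w r :: "nat \<Rightarrow> real" and N n0 :: nat
  assumes N_pos: "1 \<le> N" and n0_ge: "N \<le> n0"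
    and w_nonneg: "\<And>k. 0 \<le> w k" and w_sum: "(\<Sum>k=1..N. w k) = 1"
    and w_first: "0 < w 1" and w_last: "0 < w N"
    and recurrence: "\<And>n. n0 \<le> n \<Longrightarrow> r n = (\<Sum>k=1..N. w k * r (n - k))"
begin

lemma window_vals_nonempty: "n0 \<le> n \<Longrightarrow> window_vals r N n \<noteq> {}"
  using window_vals_eq_empty_iff N_pos n0_ge by simp

lemma w_first_le_1: "w 1 \<le> 1"
proof -
  have "w 1 \<le> (\<Sum>k=1..N. w k)" using N_pos w_nonneg by (intro member_le_sum) auto
  then show ?thesis using w_sum by simp
qed

lemma recurrence_le:
  assumes "n0 \<le> n" "k0 \<in> {1..N}" "\<And>k. k \<in> {1..N} \<Longrightarrow> r (n - k) \<le> B"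
  shows "r n \<le> w k0 * r (n - k0) + (1 - w k0) * B"
proof -
  have "r n = w k0 * r (n - k0) + (\<Sum>k\<in>{1..N} - {k0}. w k * r (n - k))"
    using recurrence[OF assms(1)] assms(2) by (simp add: sum.remove)
  also have "(\<Sum>k\<in>{1..N} - {k0}. w k * r (n - k)) \<le> (\<Sum>k\<in>{1..N} - {k0}. w k * B)"
    using assms(3) w_nonneg by (intro sum_mono mult_left_mono) auto
  also have "\<dots> = (1 - w k0) * B"
    using assms(2) w_sum by (simp add: sum.remove sum_distrib_right[symmetric])
  finally show ?thesis by simp
qed

lemma r_le_window_max:
  assumes "n0 \<le> n" "n - N \<le> i"
  shows "r i \<le> window_max r N n"
  using assms(2)
proof (induction i rule: less_induct)
  case (less i)
  show ?case
  proof (cases "i < n")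
    case True
    then have "r i \<in> window_vals r N n" unfolding window_vals_def using less.prems by auto
    then show ?thesis unfolding window_max_def using finite_window_vals by auto
  next
    case False
    then have i: "n0 \<le> i" using assms(1) by simp
    have IH: "r (i - k) \<le> window_max r N n" if "k \<in> {1..N}" for k
      using less.IH[of "i - k"] that False n0_ge i by auto
    have "r i \<le> w 1 * r (i - 1) + (1 - w 1) * window_max r N n"
      using recurrence_le[OF i] IH N_pos by simp
    also have "\<dots> \<le> window_max r N n"
      using IH[of 1] N_pos w_nonneg[of 1] mult_left_mono[of "r (i - 1)" "window_max r N n" "w 1"]
      by (simp add: algebra_simps)
    finally show ?thesis .
  qed
qed

lemma convex_recurrence_uminus: "convex_recurrence w (\<lambda>n. - r n) N n0"
proof (rule convex_recurrence.intro)
  show "- r n = (\<Sum>k=1..N. w k * - r (n - k))" if "n0 \<le> n" for n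
    using recurrence[OF that] by (simp add: sum_negf)
qed (fact N_pos n0_ge w_nonneg w_sum w_first w_last)+

lemma window_min_le_r:
  assumes "n0 \<le> n" "n - N \<le> i"
  shows "window_min r N n \<le> r i"
proof -
  have "- r i \<le> window_max (\<lambda>n. - r n) N n"
    using convex_recurrence.r_le_window_max[OF convex_recurrence_uminus assms] .
  then show ?thesis using window_max_uminus[of N n r] assms(1) N_pos n0_ge by simp
qed

lemma window_min_le_window_max: "n0 \<le> n \<Longrightarrow> window_min r N n \<le> window_max r N n"
  using window_min_le_r r_le_window_max by fastforce

(* A minimum of the window at j keeps the next 2 * N values below the window maximum by a fixed
   fraction of the diameter. *)
lemma r_after_argmin:
  assumes "n0 \<le> n" "j \<in> {n - N..<n}" "r j = window_min r N n"
  shows "r (j + N + t) \<le> window_max r N n - w 1 ^ t * w N * (window_max r N n - window_min r N n)"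
proof (induction t)
  case 0
  have "n0 \<le> j + N" using assms by auto
  moreover have "r (j + N - k) \<le> window_max r N n" if "k \<in> {1..N}" for k
    by (rule r_le_window_max[OF assms(1)]) (use assms(2) that in auto)
  ultimately have "r (j + N) \<le> w N * r (j + N - N) + (1 - w N) * window_max r N n"
    using recurrence_le[of "j + N" N "window_max r N n"] N_pos by simp
  then show ?case using assms(3) by (simp add: algebra_simps)
next
  case (Suc t)
  have "n0 \<le> j + N + Suc t" using assms by auto
  moreover have "r (j + N + Suc t - k) \<le> window_max r N n" if "k \<in> {1..N}" for k
    by (rule r_le_window_max[OF assms(1)]) (use assms(2) that in auto)
  ultimately have "r (j + N + Suc t) \<le> w 1 * r (j + N + Suc t - 1) + (1 - w 1) * window_max r N n"
    using recurrence_le[of "j + N + Suc t" 1 "window_max r N n"] N_pos by simp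
  also have "\<dots> \<le> w 1 * (window_max r N n - w 1 ^ t * w N * (window_max r N n - window_min r N n)) + (1 - w 1) * window_max r N n"
    using Suc.IH w_nonneg[of 1] by (intro add_right_mono mult_left_mono) auto
  also have "\<dots> = window_max r N n - w 1 ^ Suc t * w N * (window_max r N n - window_min r N n)" by (simp add: algebra_simps)
  finally show ?case .
qed

definition contraction :: real where
  "contraction = w 1 ^ (2 * N) * w N"

lemma window_max_contract:
  assumes "n0 \<le> n"
  shows "window_max r N (n + 2 * N) \<le> window_max r N n - contraction * (window_max r N n - window_min r N n)"
proof -
  obtain j where j: "j \<in> {n - N..<n}" "r j = window_min r N n"
    using Min_in[OF finite_window_vals window_vals_nonempty[OF assms]] unfolding window_min_def window_vals_def by auto
  have "r i \<le> window_max r N n - contraction * (window_max r N n - window_min r N n)" if "i \<in> {n + 2 * N - N..<n + 2 * N}" for i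
  proof -
    define t where "t = i - j - N"
    have it: "i = j + N + t" "t \<le> 2 * N" unfolding t_def using that j by auto
    have "w 1 ^ (2 * N) \<le> w 1 ^ t" using it(2) w_nonneg[of 1] w_first_le_1 by (rule power_decreasing)
    then have "contraction * (window_max r N n - window_min r N n) \<le> w 1 ^ t * w N * (window_max r N n - window_min r N n)"
      unfolding contraction_def using window_min_le_window_max[OF assms] w_last by (intro mult_right_mono) auto
    then show ?thesis using r_after_argmin[OF assms j, of t] it by simp
  qed
  then show ?thesis
    using finite_window_vals window_vals_nonempty[of "n + 2 * N"] assms unfolding window_max_def window_vals_def by simp
qed

lemma window_min_contract:
  assumes "n0 \<le> n"
  shows "window_min r N n + contraction * (window_max r N n - window_min r N n) \<le> window_min r N (n + 2 * N)"
proof -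
  have "window_max (\<lambda>n. - r n) N (n + 2 * N)
      \<le> window_max (\<lambda>n. - r n) N n - contraction * (window_max (\<lambda>n. - r n) N n - window_min (\<lambda>n. - r n) N n)"
    using convex_recurrence.window_max_contract[OF convex_recurrence_uminus assms] unfolding contraction_def .
  then show ?thesis
    using assms N_pos n0_ge by (simp add: window_max_uminus window_min_uminus algebra_simps)
qed

lemma diameter_geometric:
  defines "\<rho> \<equiv> max 0 (1 - 2 * contraction)"
  shows "window_max r N (n0 + 2 * N * q) - window_min r N (n0 + 2 * N * q) \<le> \<rho> ^ q * (window_max r N n0 - window_min r N n0)"
proof (induction q)
  case (Suc q)
  define n where "n = n0 + 2 * N * q"
  have "n0 \<le> n" unfolding n_def by simp
  have "window_max r N (n + 2 * N) - window_min r N (n + 2 * N) \<le> (1 - 2 * contraction) * (window_max r N n - window_min r N n)"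
    using window_max_contract[OF \<open>n0 \<le> n\<close>] window_min_contract[OF \<open>n0 \<le> n\<close>] by (simp add: algebra_simps)
  also have "\<dots> \<le> \<rho> * (window_max r N n - window_min r N n)"
    unfolding \<rho>_def using window_min_le_window_max[OF \<open>n0 \<le> n\<close>] by (intro mult_right_mono) auto
  also have "\<dots> \<le> \<rho> * (\<rho> ^ q * (window_max r N n0 - window_min r N n0))"
    using Suc.IH unfolding n_def \<rho>_def by (intro mult_left_mono) auto
  finally show ?case unfolding n_def by (simp add: algebra_simps)
qed simp

theorem convergent_ge_window_min: "\<exists>l. r \<longlonglongrightarrow> l \<and> window_min r N n0 \<le> l"
proof -
  define \<rho> where "\<rho> = max 0 (1 - 2 * contraction)"
  have \<rho>: "0 \<le> \<rho>" "\<rho> < 1" unfolding \<rho>_def contraction_def using w_first w_last by auto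
  have "Cauchy r"
  proof (rule CauchyI)
    fix e :: real assume "0 < e"
    obtain q where q: "\<rho> ^ q * (window_max r N n0 - window_min r N n0) < e"
    proof (cases "window_max r N n0 - window_min r N n0 = 0")
      case False
      then have "0 < window_max r N n0 - window_min r N n0" using window_min_le_window_max[of n0] by simp
      moreover obtain q where "\<rho> ^ q < e / (window_max r N n0 - window_min r N n0)"
        using real_arch_pow_inv[of "e / (window_max r N n0 - window_min r N n0)" \<rho>] \<rho> \<open>0 < e\<close> calculation by auto
      ultimately show ?thesis using that[of q] by (simp add: field_simps)
    qed (use \<open>0 < e\<close> in auto)
    define n where "n = n0 + 2 * N * q"
    have "window_max r N n - window_min r N n < e" using diameter_geometric[of q] q unfolding n_def \<rho>_def by simp
    moreover have "window_min r N n \<le> r i" "r i \<le> window_max r N n" if "n \<le> i" for i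
      using window_min_le_r r_le_window_max that unfolding n_def by simp_all
    ultimately have "\<forall>i\<ge>n. \<forall>i'\<ge>n. norm (r i - r i') < e"
      unfolding real_norm_def abs_less_iff by force
    then show "\<exists>M. \<forall>m\<ge>M. \<forall>n\<ge>M. norm (r m - r n) < e" by blast
  qed
  then obtain l where l: "r \<longlonglongrightarrow> l" by (auto simp: Cauchy_convergent_iff convergent_def)
  moreover have "window_min r N n0 \<le> l"
    by (rule LIMSEQ_le_const[OF l]) (use window_min_le_r in auto)
  ultimately show ?thesis by blast
qed

end

section \<open>Frequencies of leading blocks\<close>

lemma log_ratio_tendsto:
  fixes f :: "nat \<Rightarrow> real"
  assumes "1 < b" "0 < c" "0 < D" "(\<lambda>M. f M / b ^ M) \<longlonglongrightarrow> c * D"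
  shows "(\<lambda>M. log b (f M / c) - real M) \<longlonglongrightarrow> log b D"
proof -
  have "(\<lambda>M. log b (f M / b ^ M / c)) \<longlonglongrightarrow> log b (c * D / c)"
    using assms by (intro tendsto_log tendsto_divide) auto
  moreover have "\<forall>\<^sub>F M in sequentially. 0 < f M / b ^ M"
    using order_tendstoD(1)[OF assms(4), of 0] assms(2,3) by simp
  then have "\<forall>\<^sub>F M in sequentially. log b (f M / b ^ M / c) = log b (f M / c) - real M"
  proof eventually_elim
    case (elim M)
    then have "0 < f M" using assms(1) by (simp add: zero_less_divide_iff)
    then show ?case
      using assms(1,2) by (simp add: log_divide log_mult log_nat_power divide_divide_eq_left' mult.commute)
  qed
  ultimately show ?thesis using assms(2) by (simp add: tendsto_cong)
qed

lemma base_gt_1_of_asymp: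
  fixes K :: "nat \<Rightarrow> nat"
  assumes "\<And>n. 0 < K n" "0 < \<alpha>" "0 < \<beta>" "\<beta> \<noteq> 1"
    and "(\<lambda>n. real (K n) / (\<alpha> * \<beta> ^ n)) \<longlonglongrightarrow> 1"
  shows "1 < \<beta>"
proof (rule ccontr)
  assume "\<not> 1 < \<beta>"
  then have "(\<lambda>n. real (K n) / (\<alpha> * \<beta> ^ n) * (\<alpha> * \<beta> ^ n)) \<longlonglongrightarrow> 1 * (\<alpha> * 0)"
    using assms(3,4) by (intro tendsto_intros assms(5) LIMSEQ_power_zero) auto
  then have "(\<lambda>n. real (K n)) \<longlonglongrightarrow> 0" using assms(2,3) by simp
  moreover have "1 \<le> real (K n)" for n using assms(1)[of n] by simp
  ultimately show False using LIMSEQ_le_const[of "\<lambda>n. real (K n)" 0 1] by auto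
qed

lemma eventually_ge_linear:
  assumes "0 < g"
  shows "\<forall>\<^sub>F k in sequentially. C \<le> real k * g + \<delta>"
  using eventually_ge_at_top[of "nat \<lceil>(C - \<delta>) / g\<rceil>"]
proof eventually_elim
  case (elim k)
  then have "(C - \<delta>) / g \<le> real k" by linarith
  then show ?case using assms by (simp add: field_simps)
qed

lemma eventually_abs_less_of_tendsto:
  fixes f :: "nat \<Rightarrow> real"
  assumes "f \<longlonglongrightarrow> l" "0 < e"
  shows "\<forall>\<^sub>F k in sequentially. \<bar>f k - l\<bar> < e"
  using assms(1)[unfolded tendsto_iff, rule_format, OF assms(2)] by (simp add: dist_real_def)

context numeration_system
begin

definition char_sum :: "real \<Rightarrow> real" where
  "char_sum x = (\<Sum>k=1..<N. real (aco L k) / x ^ k) + (1 + real (aco L N)) / x ^ N"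

lemma char_poly_eq_char_sum:
  assumes "0 < x"
  shows "x ^ N - (\<Sum>k=1..<N. real (aco L k) * x ^ (N - k)) - (1 + real (aco L N)) = x ^ N * (1 - char_sum x)"
proof -
  have "x ^ N * (real (aco L k) / x ^ k) = real (aco L k) * x ^ (N - k)" if "k < N" for k
    using assms that by (simp add: power_diff less_imp_le)
  then have "x ^ N * (\<Sum>k=1..<N. real (aco L k) / x ^ k) = (\<Sum>k=1..<N. real (aco L k) * x ^ (N - k))"
    unfolding sum_distrib_left by (intro sum.cong) auto
  moreover have "x ^ N * ((1 + real (aco L N)) / x ^ N) = 1 + real (aco L N)" using assms by simp
  ultimately show ?thesis unfolding char_sum_def by (simp add: algebra_simps)
qed

lemma char_sum_strict_antimono: "0 < x \<Longrightarrow> x < y \<Longrightarrow> char_sum y < char_sum x"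
proof -
  assume xy: "0 < x" "x < y"
  have "(\<Sum>k=1..<N. real (aco L k) / y ^ k) \<le> (\<Sum>k=1..<N. real (aco L k) / x ^ k)"
    using xy by (intro sum_mono divide_left_mono power_mono mult_pos_pos) auto
  moreover have "(1 + real (aco L N)) / y ^ N < (1 + real (aco L N)) / x ^ N"
    using xy N_pos by (intro divide_strict_left_mono power_strict_mono mult_pos_pos) auto
  ultimately show ?thesis unfolding char_sum_def by simp
qed

lemma char_sum_1_gt_1: "1 < char_sum 1"
proof -
  have "real (aco L 1) \<le> (\<Sum>k=1..<N. real (aco L k))"
    using length_L_ge2 by (intro member_le_sum) auto
  moreover have "0 < aco L 1" using L_first_pos unfolding aco_def by simp
  ultimately show ?thesis unfolding char_sum_def by simp
qed

lemma char_sum_le_1: "char_sum (1 + char_sum 1) \<le> 1"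
proof -
  define X where "X = 1 + char_sum 1"
  have X: "1 \<le> X" "char_sum 1 / X < 1" unfolding X_def using char_sum_1_gt_1 by auto
  have "(\<Sum>k=1..<N. real (aco L k) / X ^ k) \<le> (\<Sum>k=1..<N. real (aco L k) / X)"
    using X(1) by (intro sum_mono divide_left_mono) (auto simp: power_increasing[of 1 _ X, simplified])
  moreover have "(1 + real (aco L N)) / X ^ N \<le> (1 + real (aco L N)) / X"
    using X(1) N_pos by (intro divide_left_mono) (auto simp: power_increasing[of 1 N X, simplified])
  ultimately have "char_sum X \<le> char_sum 1 / X"
    unfolding char_sum_def add_divide_distrib sum_divide_distrib by simp
  then show ?thesis using X(2) unfolding X_def by simp
qed

lemma continuous_on_char_sum: "continuous_on {1..X} char_sum"
  unfolding char_sum_def by (intro continuous_intros) auto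

lemma psi_gt_1: "1 < psi L" and char_sum_psi: "char_sum (psi L) = 1"
proof -
  obtain x where x: "1 \<le> x" "char_sum x = 1"
    using IVT2'[of char_sum "1 + char_sum 1" 1 1] char_sum_1_gt_1 char_sum_le_1 continuous_on_char_sum
    by fastforce
  have "x \<noteq> 1" using x char_sum_1_gt_1 by auto
  have "psi L = x"
    unfolding psi_def
  proof (rule the_equality)
    fix y assume "0 < y \<and> y ^ N - (\<Sum>k=1..<N. real (aco L k) * y ^ (N - k)) - (1 + real (aco L N)) = 0"
    then have "0 < y" "char_sum y = 1" using char_poly_eq_char_sum[of y] by auto
    then show "y = x"
      using char_sum_strict_antimono[of y x] char_sum_strict_antimono[of x y] x by (cases y x rule: linorder_cases) auto
  qed (use x char_poly_eq_char_sum[of x] in auto)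
  then show "1 < psi L" "char_sum (psi L) = 1" using x \<open>x \<noteq> 1\<close> by auto
qed

abbreviation "\<psi> \<equiv> psi L"

definition rec_coeff :: "nat \<Rightarrow> real" where
  "rec_coeff k = (if k < N then real (aco L k) else 1 + real (aco L N))"

definition rec_weight :: "nat \<Rightarrow> real" where
  "rec_weight k = rec_coeff k / \<psi> ^ k"

definition H_ratio :: "nat \<Rightarrow> real" where
  "H_ratio n = real (H n) / \<psi> ^ n"

lemma psi_pos: "0 < \<psi>"
  using psi_gt_1 by simp

lemma rec_weight_sum: "(\<Sum>k=1..N. rec_weight k) = 1"
proof -
  have "(\<Sum>k=1..N. rec_weight k) = (\<Sum>k=1..<N. rec_weight k) + rec_weight N"
    using N_pos by (simp add: sum.last_plus add.commute)
  also have "(\<Sum>k=1..<N. rec_weight k) = (\<Sum>k=1..<N. real (aco L k) / \<psi> ^ k)"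
    unfolding rec_weight_def rec_coeff_def by (intro sum.cong) auto
  finally show ?thesis using char_sum_psi unfolding char_sum_def rec_weight_def rec_coeff_def by simp
qed

lemma H_recurrence_real:
  assumes "N < n"
  shows "real (H (Suc n)) = (\<Sum>k=1..N. rec_coeff k * real (H (Suc n - k)))"
proof -
  have "(\<Sum>k=1..<N. real (aco L k) * real (H (Suc n - k))) = (\<Sum>k=1..<N. rec_coeff k * real (H (Suc n - k)))"
    unfolding rec_coeff_def by (intro sum.cong) auto
  then have "real (H (Suc n)) = (\<Sum>k=1..<N. rec_coeff k * real (H (Suc n - k))) + rec_coeff N * real (H (Suc n - N))"
    using Hs_recurrence[OF N_pos assms] unfolding rec_coeff_def by (simp add: algebra_simps)
  also have "\<dots> = (\<Sum>k=1..N. rec_coeff k * real (H (Suc n - k)))"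
    using N_pos by (simp add: sum.last_plus add.commute)
  finally show ?thesis .
qed

lemma convex_recurrence_H_ratio: "convex_recurrence rec_weight H_ratio N (N + 2)"
proof
  show "H_ratio n = (\<Sum>k=1..N. rec_weight k * H_ratio (n - k))" if "N + 2 \<le> n" for n
  proof -
    define n' where "n' = n - 1"
    have n': "n = Suc n'" "N < n'" using that unfolding n'_def by auto
    have "\<psi> ^ n = \<psi> ^ k * \<psi> ^ (n - k)" if "k \<le> N" for k
      using that n' by (simp add: power_add[symmetric])
    then show ?thesis
      unfolding H_ratio_def n'(1) H_recurrence_real[OF n'(2)] sum_divide_distrib
      using psi_pos n' by (intro sum.cong) (auto simp: rec_weight_def)
  qed
  show "0 < rec_weight 1"
    using length_L_ge2 L_first_pos psi_pos unfolding rec_weight_def rec_coeff_def aco_def by simp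
qed (use N_pos rec_weight_sum psi_pos in \<open>auto simp: rec_weight_def rec_coeff_def\<close>)

definition H_const :: real where
  "H_const = lim H_ratio"

lemma H_ratio_tendsto: "H_ratio \<longlonglongrightarrow> H_const" and H_const_pos: "0 < H_const"
proof -
  obtain l where l: "H_ratio \<longlonglongrightarrow> l" "window_min H_ratio N (N + 2) \<le> l"
    using convex_recurrence.convergent_ge_window_min[OF convex_recurrence_H_ratio] by blast
  have "0 < H_ratio i" if "i \<in> {N + 2 - N..<N + 2}" for i
    using H_pos[of i] that psi_pos unfolding H_ratio_def by simp
  then have "0 < window_min H_ratio N (N + 2)"
    using N_pos unfolding window_min_def window_vals_def by (subst Min_gr_iff) auto
  moreover have "H_const = l" unfolding H_const_def using l(1) by (rule limI)
  ultimately show "H_ratio \<longlonglongrightarrow> H_const" "0 < H_const" using l by auto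
qed

lemma dotH_Nil: "dotH L [] = 0"
  unfolding dotH_def by simp

lemma dotH_Cons: "dotH L (x # xs) = real x + dotH L xs / \<psi>"
proof -
  define g where "g k = real ((x # xs) ! (k - 1)) * thetaR L ^ (k - 1)" for k
  have "dotH L (x # xs) = (\<Sum>k=1..Suc (length xs). g k)"
    unfolding dotH_def g_def by simp
  also have "\<dots> = g 1 + (\<Sum>k=Suc 1..Suc (length xs). g k)"
    by (rule sum.atLeast_Suc_atMost) simp
  also have "(\<Sum>k=Suc 1..Suc (length xs). g k) = (\<Sum>k=1..length xs. g (Suc k))"
    by (rule sum.shift_bounds_cl_Suc_ivl)
  also have "\<dots> = thetaR L * dotH L xs"
    unfolding g_def dotH_def sum_distrib_left by (intro sum.cong) (auto simp: nth_Cons' power_eq_if)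
  finally show ?thesis unfolding g_def thetaR_def by (simp add: divide_inverse mult.commute)
qed

lemma dotH_append_zeros: "dotH L (xs @ replicate n 0) = dotH L xs"
proof (induction xs)
  case Nil
  show ?case by (induction n) (simp_all add: dotH_Nil dotH_Cons)
qed (simp add: dotH_Cons)

lemma dotH_pad: "dotH L (pad s p) = dotH L p"
  unfolding pad_def by (simp add: dotH_append_zeros)

lemma val_shift_asymp: "(\<lambda>j. real (val p j) / \<psi> ^ (j + length p)) \<longlonglongrightarrow> H_const * dotH L p"
proof (induction p)
  case Nil
  then show ?case by (simp add: dotH_Nil)
next
  case (Cons x xs)
  have "real (val (x # xs) j) / \<psi> ^ (j + length (x # xs))
      = real x * H_ratio (j + Suc (length xs)) + (real (val xs j) / \<psi> ^ (j + length xs)) / \<psi>" for j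
    unfolding H_ratio_def using psi_pos by (simp add: add_divide_distrib ac_simps)
  moreover have "(\<lambda>j. real x * H_ratio (j + Suc (length xs)) + (real (val xs j) / \<psi> ^ (j + length xs)) / \<psi>)
      \<longlonglongrightarrow> real x * H_const + H_const * dotH L xs / \<psi>"
    by (intro tendsto_intros LIMSEQ_ignore_initial_segment[OF H_ratio_tendsto] Cons.IH) (use psi_pos in simp)
  ultimately show ?case by (simp add: dotH_Cons algebra_simps)
qed

lemma val_block_asymp:
  assumes "length p = s"
  shows "(\<lambda>M. real (val p (M - s)) / \<psi> ^ M) \<longlonglongrightarrow> H_const * dotH L p"
  using LIMSEQ_offset[of "\<lambda>M. real (val p (M - s)) / \<psi> ^ M" s] val_shift_asymp[of p] assms
  by (simp add: add.commute)

lemma H_Suc_asymp: "(\<lambda>M. real (H (Suc M)) / \<psi> ^ M) \<longlonglongrightarrow> H_const * \<psi>"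
proof -
  have "(\<lambda>M. H_ratio (Suc M) * \<psi>) \<longlonglongrightarrow> H_const * \<psi>"
    by (intro tendsto_intros LIMSEQ_Suc H_ratio_tendsto)
  moreover have "H_ratio (Suc M) * \<psi> = real (H (Suc M)) / \<psi> ^ M" for M
    unfolding H_ratio_def using psi_pos by (simp add: field_simps)
  ultimately show ?thesis by simp
qed

lemma dotH_exclusive_block:
  assumes "1 \<le> s"
  shows "dotH L (exclusive_block L s) = \<psi>"
proof -
  obtain l where l: "length (exclusive_block L s) = l" "\<And>j. val (exclusive_block L s) j = H (Suc (l + j))"
    using val_exclusive_block[OF assms] by blast
  have "(\<lambda>j. real (H (Suc (j + l))) / \<psi> ^ (j + l)) \<longlonglongrightarrow> H_const * dotH L (exclusive_block L s)"
    using val_shift_asymp[of "exclusive_block L s"] l by (simp add: add.commute)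
  moreover have "(\<lambda>j. real (H (Suc (j + l))) / \<psi> ^ (j + l)) \<longlonglongrightarrow> H_const * \<psi>"
    using LIMSEQ_ignore_initial_segment[OF H_Suc_asymp, of l] .
  ultimately have "H_const * dotH L (exclusive_block L s) = H_const * \<psi>" by (rule LIMSEQ_unique)
  then show ?thesis using H_const_pos by simp
qed

lemma upper_end_asymp:
  assumes "1 \<le> s" "p \<in> raw_blocks s"
  shows "(\<lambda>M. real (upper_end s p M) / \<psi> ^ M) \<longlonglongrightarrow> H_const * dotH L (succ_block L s (pad s p))"
proof (cases "p = tp s")
  case True
  then show ?thesis
    unfolding upper_end_def succ_block_pad[OF assms] using H_Suc_asymp dotH_exclusive_block[OF assms(1)] by simp
next
  case False
  then show ?thesis
    unfolding upper_end_def succ_block_pad[OF assms]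
    using val_block_asymp[of "next_block s p" s] next_block[OF assms False] raw_blocksD by (simp add: dotH_pad)
qed

lemma dotH_block_bounds:
  assumes "1 \<le> s" "p \<in> raw_blocks s"
  shows "1 \<le> dotH L p" "dotH L p \<le> dotH L (succ_block L s (pad s p))"
    "dotH L (succ_block L s (pad s p)) \<le> \<psi>"
proof -
  have len: "length p = s" using raw_blocksD[OF assms(2)] by simp
  have "\<forall>\<^sub>F M in sequentially. real (H M) / \<psi> ^ M \<le> real (val p (M - s)) / \<psi> ^ M"
    using eventually_ge_at_top[of s]
    by eventually_elim (use H_le_val_block[OF assms] psi_pos in \<open>simp add: divide_right_mono\<close>)
  then have "H_const \<le> H_const * dotH L p"
    using tendsto_le[OF _ val_block_asymp[OF len] H_ratio_tendsto[unfolded H_ratio_def]] by simp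
  then show "1 \<le> dotH L p" using H_const_pos by simp
  have "\<forall>\<^sub>F M in sequentially. real (val p (M - s)) / \<psi> ^ M \<le> real (upper_end s p M) / \<psi> ^ M"
    using eventually_ge_at_top[of s]
    by eventually_elim (use val_block_less_upper_end[OF assms] psi_pos in \<open>simp add: divide_right_mono less_imp_le\<close>)
  then have "H_const * dotH L p \<le> H_const * dotH L (succ_block L s (pad s p))"
    using tendsto_le[OF _ upper_end_asymp[OF assms] val_block_asymp[OF len]] by simp
  then show "dotH L p \<le> dotH L (succ_block L s (pad s p))" using H_const_pos by simp
  have "\<forall>\<^sub>F M in sequentially. real (upper_end s p M) / \<psi> ^ M \<le> real (H (Suc M)) / \<psi> ^ M"
    using eventually_ge_at_top[of s]
    by eventually_elim (use upper_end_le_H[OF assms] psi_pos in \<open>simp add: divide_right_mono\<close>)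
  then have "H_const * dotH L (succ_block L s (pad s p)) \<le> H_const * \<psi>"
    using tendsto_le[OF _ H_Suc_asymp upper_end_asymp[OF assms]] by simp
  then show "dotH L (succ_block L s (pad s p)) \<le> \<psi>" using H_const_pos by simp
qed

definition log_scale :: "real \<Rightarrow> real" where
  "log_scale x = log \<psi> (x / H_const)"

lemma log_scale_less_iff: "0 < x \<Longrightarrow> 0 < y \<Longrightarrow> log_scale x < log_scale y \<longleftrightarrow> x < y"
  unfolding log_scale_def using psi_gt_1 H_const_pos by (simp add: divide_less_cancel)

lemma log_scale_le_iff: "0 < x \<Longrightarrow> 0 < y \<Longrightarrow> log_scale x \<le> log_scale y \<longleftrightarrow> x \<le> y"
  using log_scale_less_iff[of y x] by linarith

lemma LB_eq_pad_iff_log_scale: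
  assumes "1 \<le> s" "p \<in> raw_blocks s" "0 < m"
  shows "LB L s m = Some (pad s p) \<longleftrightarrow>
           (\<exists>M\<ge>s. log_scale (val p (M - s)) \<le> log_scale m \<and> log_scale m < log_scale (upper_end s p M))"
proof -
  have "0 < val p (M - s)" "0 < upper_end s p M" if "s \<le> M" for M
    using H_le_val_block[OF assms(1,2) that] H_pos[of M] val_block_less_upper_end[OF assms(1,2) that] that assms(1)
    by auto
  moreover have "1 \<le> m" using assms(3) by simp
  ultimately show ?thesis
    unfolding LB_eq_pad_iff[OF assms(1,2) \<open>1 \<le> m\<close>] using assms(3)
    by (auto simp: log_scale_le_iff log_scale_less_iff)
qed

lemma log_scale_val_block_tendsto:
  assumes "1 \<le> s" "p \<in> raw_blocks s"
  shows "(\<lambda>M. log_scale (val p (M - s)) - real M) \<longlonglongrightarrow> log \<psi> (dotH L p)"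
  unfolding log_scale_def
  using log_ratio_tendsto[OF psi_gt_1 H_const_pos _ val_block_asymp] dotH_block_bounds(1)[OF assms] raw_blocksD[OF assms(2)]
  by simp

lemma log_scale_upper_end_tendsto:
  assumes "1 \<le> s" "p \<in> raw_blocks s"
  shows "(\<lambda>M. log_scale (upper_end s p M) - real M) \<longlonglongrightarrow> log \<psi> (dotH L (succ_block L s (pad s p)))"
  unfolding log_scale_def
  using log_ratio_tendsto[OF psi_gt_1 H_const_pos _ upper_end_asymp[OF assms]] dotH_block_bounds[OF assms]
  by simp

lemma log_scale_block_ends_near:
  assumes "1 \<le> s" "p \<in> raw_blocks s" "0 < e"
  obtains M0 where "\<And>M. M0 \<le> M \<Longrightarrow> \<bar>log_scale (val p (M - s)) - real M - log \<psi> (dotH L p)\<bar> < e"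
    "\<And>M. M0 \<le> M \<Longrightarrow> \<bar>log_scale (upper_end s p M) - real M - log \<psi> (dotH L (succ_block L s (pad s p)))\<bar> < e"
proof -
  have "\<forall>\<^sub>F M in sequentially. \<bar>log_scale (val p (M - s)) - real M - log \<psi> (dotH L p)\<bar> < e \<and>
      \<bar>log_scale (upper_end s p M) - real M - log \<psi> (dotH L (succ_block L s (pad s p)))\<bar> < e"
    using eventually_abs_less_of_tendsto[OF log_scale_val_block_tendsto[OF assms(1,2)] assms(3)]
      eventually_abs_less_of_tendsto[OF log_scale_upper_end_tendsto[OF assms(1,2)] assms(3)]
    by (rule eventually_conj)
  then show ?thesis using that unfolding eventually_sequentially by blast
qed

lemma LB_eq_pad_of_frac_window:
  assumes "1 \<le> s" "p \<in> raw_blocks s" "\<And>k. 0 < K k" "0 < g" "0 < \<epsilon>"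
    and err: "(\<lambda>k. log_scale (K k) - (real k * g + \<delta>)) \<longlonglongrightarrow> 0"
  defines "u \<equiv> log \<psi> (dotH L p)" and "v \<equiv> log \<psi> (dotH L (succ_block L s (pad s p)))"
  shows "\<forall>\<^sub>F k in sequentially.
           frac (real k * g + (\<delta> - u - \<epsilon> / 2)) < v - u - \<epsilon> \<longrightarrow> LB L s (K k) = Some (pad s p)"
proof -
  obtain M0 where lo: "\<And>M. M0 \<le> M \<Longrightarrow> \<bar>log_scale (val p (M - s)) - real M - u\<bar> < \<epsilon> / 4"
    and hi: "\<And>M. M0 \<le> M \<Longrightarrow> \<bar>log_scale (upper_end s p M) - real M - v\<bar> < \<epsilon> / 4"
    using log_scale_block_ends_near[OF assms(1,2), of "\<epsilon> / 4"] assms(5) unfolding u_def v_def by auto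
  have "0 < \<epsilon> / 4" using assms(5) by simp
  show ?thesis
    using eventually_abs_less_of_tendsto[OF err \<open>0 < \<epsilon> / 4\<close>] eventually_ge_linear[OF assms(4), of "real (max M0 s) + u + \<epsilon>" \<delta>]
  proof eventually_elim
    case (elim k)
    define y where "y = real k * g + \<delta>"
    define M where "M = nat \<lfloor>y - u - \<epsilon> / 2\<rfloor>"
    have M: "real M \<le> y - u - \<epsilon> / 2" "y - u - \<epsilon> / 2 < real M + 1" "max M0 s \<le> M"
      using elim(2) assms(5) unfolding M_def y_def by linarith+
    show ?case
    proof
      assume "frac (real k * g + (\<delta> - u - \<epsilon> / 2)) < v - u - \<epsilon>"
      moreover have "frac (real k * g + (\<delta> - u - \<epsilon> / 2)) = y - u - \<epsilon> / 2 - real M"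
        using M(1,2) unfolding y_def by (subst frac_unique_iff) (auto simp: algebra_simps intro: Ints_of_nat)
      ultimately have "log_scale (val p (M - s)) < log_scale (K k)" "log_scale (K k) < log_scale (upper_end s p M)"
        using lo[of M] hi[of M] M elim(1) unfolding y_def abs_less_iff by linarith+
      then show "LB L s (K k) = Some (pad s p)"
        using LB_eq_pad_iff_log_scale[OF assms(1,2,3)] M(3) by force
    qed
  qed
qed

lemma frac_window_of_LB_eq_pad:
  assumes "1 \<le> s" "p \<in> raw_blocks s" "\<And>k. 0 < K k" "0 < g" "0 < \<epsilon>"
    and err: "(\<lambda>k. log_scale (K k) - (real k * g + \<delta>)) \<longlonglongrightarrow> 0"
  defines "u \<equiv> log \<psi> (dotH L p)" and "v \<equiv> log \<psi> (dotH L (succ_block L s (pad s p)))"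
  assumes width: "v - u + \<epsilon> \<le> 1"
  shows "\<forall>\<^sub>F k in sequentially.
           LB L s (K k) = Some (pad s p) \<longrightarrow> frac (real k * g + (\<delta> - u + \<epsilon> / 2)) < v - u + \<epsilon>"
proof -
  obtain M0 where lo: "\<And>M. M0 \<le> M \<Longrightarrow> \<bar>log_scale (val p (M - s)) - real M - u\<bar> < \<epsilon> / 4"
    and hi: "\<And>M. M0 \<le> M \<Longrightarrow> \<bar>log_scale (upper_end s p M) - real M - v\<bar> < \<epsilon> / 4"
    using log_scale_block_ends_near[OF assms(1,2), of "\<epsilon> / 4"] assms(5) unfolding u_def v_def by auto
  have "0 < \<epsilon> / 4" using assms(5) by simp
  show ?thesis
    using eventually_abs_less_of_tendsto[OF err \<open>0 < \<epsilon> / 4\<close>]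
      eventually_ge_linear[OF assms(4), of "log_scale (H (max M0 1)) + \<epsilon>" \<delta>]
  proof eventually_elim
    case (elim k)
    show ?case
    proof
      assume "LB L s (K k) = Some (pad s p)"
      then obtain M where M: "s \<le> M" "log_scale (val p (M - s)) \<le> log_scale (K k)"
          "log_scale (K k) < log_scale (upper_end s p M)"
        using LB_eq_pad_iff_log_scale[OF assms(1,2,3)] by blast
      have "M0 \<le> M"
      proof (rule ccontr)
        assume "\<not> M0 \<le> M"
        then have "upper_end s p M \<le> H (max M0 1)"
          using upper_end_le_H[OF assms(1,2) M(1)] H_mono[of "Suc M" "max M0 1"] by simp
        moreover have "0 < upper_end s p M"
          using val_block_less_upper_end[OF assms(1,2) M(1)] by simp
        ultimately have "log_scale (K k) < log_scale (H (max M0 1))"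
          using M(3) log_scale_le_iff[of "upper_end s p M" "H (max M0 1)"] by simp
        then show False using elim unfolding abs_less_iff by linarith
      qed
      define z where "z = real k * g + \<delta> - u + \<epsilon> / 2 - real M"
      have z: "0 \<le> z" "z < v - u + \<epsilon>"
        using lo[OF \<open>M0 \<le> M\<close>] hi[OF \<open>M0 \<le> M\<close>] M(2,3) elim(1) unfolding z_def abs_less_iff by linarith+
      have "frac (real k * g + (\<delta> - u + \<epsilon> / 2)) = z"
        using z width unfolding z_def by (subst frac_unique_iff) (auto simp: algebra_simps intro: Ints_of_nat)
      then show "frac (real k * g + (\<delta> - u + \<epsilon> / 2)) < v - u + \<epsilon>" using z by simp
    qed
  qed
qed

lemma log_scale_asymp:
  assumes "\<And>n. 0 < K n" "0 < \<alpha>" "0 < \<beta>" "(\<lambda>n. real (K n) / (\<alpha> * \<beta> ^ n)) \<longlonglongrightarrow> 1"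
  shows "(\<lambda>k. log_scale (K k) - (real k * log \<psi> \<beta> + log \<psi> (\<alpha> / H_const))) \<longlonglongrightarrow> 0"
proof -
  have "(\<lambda>k. log \<psi> (real (K k) / (\<alpha> * \<beta> ^ k))) \<longlonglongrightarrow> log \<psi> 1"
    using psi_gt_1 by (intro tendsto_log assms(4)) auto
  moreover have "log \<psi> (real (K k) / (\<alpha> * \<beta> ^ k)) = log_scale (K k) - (real k * log \<psi> \<beta> + log \<psi> (\<alpha> / H_const))" for k
  proof -
    have "real (K k) / (\<alpha> * \<beta> ^ k) = (real (K k) / H_const) / ((\<alpha> / H_const) * \<beta> ^ k)"
      using H_const_pos by simp
    then show ?thesis
      using assms(1)[of k] assms(2,3) H_const_pos psi_gt_1
      by (simp add: log_scale_def log_divide log_mult log_nat_power)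
  qed
  ultimately show ?thesis by simp
qed

theorem block_frequency:
  assumes "1 \<le> s" "p \<in> raw_blocks s" "\<And>k. 0 < K k" "0 < g" "g \<notin> \<rat>"
    and err: "(\<lambda>k. log_scale (K k) - (real k * g + \<delta>)) \<longlonglongrightarrow> 0"
  shows "(\<lambda>n. real (card {k \<in> {1..n}. LB L s (K k) = Some (pad s p)}) / real n)
           \<longlonglongrightarrow> log \<psi> (dotH L (succ_block L s (pad s p)) / dotH L p)"
proof -
  define u where "u = log \<psi> (dotH L p)"
  define v where "v = log \<psi> (dotH L (succ_block L s (pad s p)))"
  note bounds = dotH_block_bounds[OF assms(1,2)]
  have "log \<psi> (dotH L (succ_block L s (pad s p)) / dotH L p) = v - u"
    unfolding u_def v_def using bounds by (simp add: log_divide)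
  moreover have "0 \<le> u" "u \<le> v" "v \<le> 1"
    unfolding u_def v_def using bounds psi_gt_1 by auto
  then have "0 \<le> v - u" "v - u \<le> 1" by linarith+
  then have "(\<lambda>n. real (card {k \<in> {1..n}. LB L s (K k) = Some (pad s p)}) / real n) \<longlonglongrightarrow> v - u"
  proof (rule density_by_frac_window[OF assms(5)])
    fix \<epsilon> :: real assume "0 < \<epsilon>"
    then show "\<exists>\<delta>'. \<forall>\<^sub>F k in sequentially. frac (real k * g + \<delta>') < v - u - \<epsilon> \<longrightarrow> LB L s (K k) = Some (pad s p)"
      using LB_eq_pad_of_frac_window[OF assms(1-4) _ err] unfolding u_def v_def by blast
  next
    fix \<epsilon> :: real assume "0 < \<epsilon>" "v - u + \<epsilon> \<le> 1"
    then show "\<exists>\<delta>'. \<forall>\<^sub>F k in sequentially. LB L s (K k) = Some (pad s p) \<longrightarrow> frac (real k * g + \<delta>') < v - u + \<epsilon>"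
      using frac_window_of_LB_eq_pad[OF assms(1-4) _ err] unfolding u_def v_def by blast
  qed
  ultimately show ?thesis by simp
qed

end

theorem theorem6p9:
  fixes L :: "nat list" and K :: "nat \<Rightarrow> nat" and \<alpha> \<beta> :: real
    and s :: nat and b :: "nat list"
  assumes "length L \<ge> 2" and "L ! 0 > 0"
    and "\<And>n. K n > 0"
    and "\<alpha> > 0" and "\<beta> > 0"
    and "(\<lambda>n. real (K n) / (\<alpha> * \<beta> ^ n)) \<longlonglongrightarrow> 1"
    and "log (psi L) \<beta> \<notin> \<rat>"
    and "s \<ge> 1"
    and "b \<in> Hblocks L s"
  shows "(\<lambda>n. real (card {k \<in> {1..n}. LB L s (K k) = Some b}) / real n)
           \<longlonglongrightarrow> log (psi L) (dotH L (succ_block L s b) / dotH L b)"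
proof -
  have L: "numeration_system L" using assms(1,2) by unfold_locales
  obtain p where p: "p \<in> numeration_system.raw_blocks L s" "b = numeration_system.pad L s p"
    using assms(9) numeration_system.Hblocks_eq_pad_raw_blocks[OF L assms(8)] by auto
  have "\<beta> \<noteq> 1" using assms(7) by auto
  then have "0 < log (psi L) \<beta>"
    using base_gt_1_of_asymp[OF assms(3-5) _ assms(6)] numeration_system.psi_gt_1[OF L] by simp
  from numeration_system.block_frequency[OF L assms(8) p(1) assms(3) this assms(7)
      numeration_system.log_scale_asymp[OF L assms(3-6)]]
  show ?thesis using p(2) numeration_system.dotH_pad[OF L] by simp
qed

end
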